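(* Let $\mathcal C\subseteq[0,1]^n$ be a down-closed convex set with $\mathbf 0\in\mathcal C$. Let $f_1,\dots,f_T:[0,1]^n\to\mathbb R_+$ be a sequence fixed in advance, each differentiable, DR-submodular and $L_0$-smooth. Suppose a stochastic gradient oracle is available for every $f_t$: for every $\mathbf x\in[0,1]^n$ it returns a random vector $\widetilde\nabla f_t(\mathbf x)$ with $\mathbb E(\widetilde\nabla f_t(\mathbf x)\mid\mathbf x)=\nabla f_t(\mathbf x)$ and $\mathbb E\|\widetilde\nabla f_t(\mathbf x)-\nabla f_t(\mathbf x)\|^2\le\sigma^2$. Suppose each of the online linear maximization oracles $\mathcal E^{(1)},\dots,\mathcal E^{(K)}$ over $\mathcal C$ used by Meta-MFW has regret at most $M_0\sqrt t$ at every horizon $t$. Run Meta-MFW with $\eta_k=\frac{2}{(k+3)^{2/3}}$ for $k\in[K]$. Then $$\frac1e\sum_{t=1}^T f_t(\mathbf x^* )-\sum_{t=1}^T\mathbb E\big(f_t(\mathbf y_t)\big)\le M_0\sqrt T+L_0 r^2(\mathcal C)\frac{T}{2K}+\frac{r(\mathcal C)}{2}(3N_0+1)\frac{T}{K^{1/3}},$$ where $\mathbf x^*\in\arg\max_{\mathbf x\in\mathcal C}\sum_{t=1}^T f_t(\mathbf x)$ and $N_0=\max\{4^{2/3}\max_{t\in[T]}\|\nabla f_t(\mathbf x_t^{(1)})\|^2,\;4\sigma^2+6(L_0r(\mathcal C))^2\}$ (the maximum also taken over all realizations of $\mathbf x_t^{(1)}$).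
   Context: Notation: inequalities between vectors are coordinatewise; $\odot$ is the coordinatewise product; $\mathbf 0,\mathbf 1$ are the all-zeros and all-ones vectors; $\|\cdot\|$ is the Euclidean norm; $[K]=\{1,\dots,K\}$. A differentiable $f:[0,1]^n\to\mathbb R_+$ is DR-submodular if $\nabla f(\mathbf x)\le\nabla f(\mathbf y)$ whenever $\mathbf x\ge\mathbf y$; it is $L_0$-smooth if $\|\nabla f(\mathbf x)-\nabla f(\mathbf y)\|\le L_0\|\mathbf x-\mathbf y\|$ for all $\mathbf x,\mathbf y\in[0,1]^n$. A set $\mathcal C\subseteq[0,1]^n$ is down-closed if $\mathbf y\in\mathcal C$ and $\mathbf 0\le\mathbf x\le\mathbf y$ imply $\mathbf x\in\mathcal C$. $r(\mathcal C)=\max_{\mathbf x\in\mathcal C}\|\mathbf x\|$, $\mathrm{diam}(\mathcal C)=\max_{\mathbf x,\mathbf y\in\mathcal C}\|\mathbf x-\mathbf y\|$. An online linear maximization oracle over a set $D$ is an online algorithm that in each of its rounds $s=1,2,\dots$ outputs $\mathbf v_s\in D$ and then receives a vector $\mathbf c_s$ (the linear payoff $\langle\mathbf c_s,\cdot\rangle$); it has regret at most $M_0\sqrt t$ at horizon $t$ if $\max_{\mathbf u\in D}\sum_{s=1}^t\langle\mathbf c_s,\mathbf u\rangle-\sum_{s=1}^t\langle\mathbf c_s,\mathbf v_s\rangle\le M_0\sqrt t$. Meta-MFW (Meta-Measured Frank-Wolfe) with parameters $K$ and $(\eta_k)_{k\in[K]}$ uses $K$ such oracles $\mathcal E^{(1)},\dots,\mathcal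 E^{(K)}$ over $\mathcal C$. For each round $t=1,\dots,T$: set $\mathbf x_t^{(0)}=\mathbf 0$; for $k=1,\dots,K$, let $\mathbf v_t^{(k)}\in\mathcal C$ be the current output of $\mathcal E^{(k)}$ and set $\mathbf x_t^{(k)}=\mathbf x_t^{(k-1)}+\frac1K\mathbf v_t^{(k)}\odot(\mathbf 1-\mathbf x_t^{(k-1)})$. Play $\mathbf y_t=\mathbf x_t^{(K)}$, receive $f_t(\mathbf y_t)$ and access to the stochastic gradient oracle of $f_t$. Set $\mathbf g_t^{(0)}=\mathbf 0$ and for $k=1,\dots,K$: $\mathbf g_t^{(k)}=(1-\eta_k)\mathbf g_t^{(k-1)}+\eta_k\widetilde\nabla f_t(\mathbf x_t^{(k)})$, and feed the linear payoff vector $\mathbf g_t^{(k)}\odot(\mathbf 1-\mathbf x_t^{(k)})$ to $\mathcal E^{(k)}$ (so that $\mathcal E^{(k)}$ receives payoff $\langle\mathbf g_t^{(k)}\odot(\mathbf 1-\mathbf x_t^{(k)}),\mathbf v_t^{(k)}\rangle$). Expectations are over all randomness of the stochastic gradients. *)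

theory Defs
  imports "HOL-Analysis.Analysis" "HOL-Probability.Probability"
begin

definition unit_cube :: "(real^'n) set" where
  "unit_cube = {x. \<forall>i. 0 \<le> x $ i \<and> x $ i \<le> 1}"

definition vle :: "real^'n \<Rightarrow> real^'n \<Rightarrow> bool" where
  "vle x y \<longleftrightarrow> (\<forall>i. x $ i \<le> y $ i)"

definition had :: "real^'n \<Rightarrow> real^'n \<Rightarrow> real^'n" where
  "had x y = (\<chi> i. x $ i * y $ i)"

definition ones :: "real^'n" where
  "ones = (\<chi> i. 1)"

definition down_closed :: "(real^'n) set \<Rightarrow> bool" where
  "down_closed C \<longleftrightarrow> (\<forall>x y. y \<in> C \<and> vle 0 x \<and> vle x y \<longrightarrow> x \<in> C)"

text \<open>r(C) = max of norms over C (written as a supremum; equal to the max whenever it exists).\<close>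
definition radius :: "(real^'n) set \<Rightarrow> real" where
  "radius C = (SUP x\<in>C. norm x)"

definition DR_submodular :: "(real^'n \<Rightarrow> real) \<Rightarrow> (real^'n \<Rightarrow> real^'n) \<Rightarrow> bool" where
  "DR_submodular f df \<longleftrightarrow>
     (\<forall>x\<in>unit_cube. (f has_derivative (\<lambda>h. df x \<bullet> h)) (at x within unit_cube)) \<and>
     (\<forall>x\<in>unit_cube. \<forall>y\<in>unit_cube. vle y x \<longrightarrow> vle (df x) (df y))"

definition smooth_on_cube :: "real \<Rightarrow> (real^'n \<Rightarrow> real^'n) \<Rightarrow> bool" where
  "smooth_on_cube L df \<longleftrightarrow>
     (\<forall>x\<in>unit_cube. \<forall>y\<in>unit_cube. norm (df x - df y) \<le> L * norm (x - y))"

text \<open>Meta-MFW inner iterates within one round: v k is the output of oracle k (k \<ge> 1).\<close>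
primrec mfw_x :: "nat \<Rightarrow> (nat \<Rightarrow> real^'n) \<Rightarrow> nat \<Rightarrow> real^'n" where
  "mfw_x K v 0 = 0"
| "mfw_x K v (Suc k) = mfw_x K v k + (1 / real K) *\<^sub>R had (v (Suc k)) (ones - mfw_x K v k)"

text \<open>Momentum gradient estimates g^(k); G k is the stochastic gradient at x^(k).\<close>
primrec mfw_g :: "(nat \<Rightarrow> real) \<Rightarrow> (nat \<Rightarrow> real^'n) \<Rightarrow> nat \<Rightarrow> real^'n" where
  "mfw_g eta G 0 = 0"
| "mfw_g eta G (Suc k) = (1 - eta (Suc k)) *\<^sub>R mfw_g eta G k + eta (Suc k) *\<^sub>R G (Suc k)"

definition mfw_eta :: "nat \<Rightarrow> real" where
  "mfw_eta k = 2 / (real k + 3) powr (2/3)"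

text \<open>Index of the k-th gradient query of round t (t,k \<ge> 1), in chronological order.\<close>
definition qidx :: "nat \<Rightarrow> nat \<Rightarrow> nat \<Rightarrow> nat" where
  "qidx K t k = (t - 1) * K + (k - 1)"

end

theory Submission
  imports Defs
begin

text \<open>
  Fix a round and a realisation of the randomness, and write x_k for the inner iterates,
  x_k = x_(k-1) + (1/K) v_k * (1 - x_(k-1)). For DR-submodular, L-smooth f and any x* in C,
    f(x_k) >= (1 - 1/K) f(x_(k-1)) + (1/K) (1 - 1/K)^(k-1) f(x*)
              + (1/K) <grad f(x_k) * (1 - x_(k-1)), v_k - x*> - L r^2 / K^2,
  where (1 - 1/K)^(k-1) f(x*) bounds f at x_(k-1) + x* * (1 - x_(k-1)) from below, because no
  coordinate of x_(k-1) exceeds 1 - (1 - 1/K)^(k-1). Unrolling over k and using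
  (1 - 1/K)^(K-1) >= 1/e bounds f(x*)/e - f(y) by a weighted sum of the linear terms
  <d_k * (1 - x_k), x* - v_k> plus an error, where d_k is the momentum average of the exact
  gradients grad f(x_j). Consecutive iterates are only r/K apart, so smoothness alone bounds
  |grad f(x_k) - d_k|; this gives the K^(-1/3) term. The gradient noise never has to be
  controlled: sigma enters only as slack in N_0, and x* need not maximise the sum.
  The weight (1 - x_k) * (x* - v_k) is fixed before the round's first gradient query, so
  unbiasedness replaces d_k by the stochastic momentum g_k in expectation, and the regret bound
  of oracle k at horizon T then controls the sum over the rounds.
\<close>

section \<open>The unit cube\<close>

lemma mem_unit_cube: "x \<in> unit_cube \<longleftrightarrow> (\<forall>i. 0 \<le> x $ i \<and> x $ i \<le> 1)"
  by (simp add: unit_cube_def)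

lemma had_nth [simp]: "had a b $ i = a $ i * b $ i"
  by (simp add: had_def)

lemma ones_nth [simp]: "ones $ i = 1"
  by (simp add: ones_def)

lemma inner_vec_sum: "a \<bullet> b = (\<Sum>i\<in>UNIV. a $ i * b $ i)"
  by (simp add: inner_vec_def)

lemma inner_had_shift: "had a b \<bullet> c = a \<bullet> had b c"
  unfolding inner_vec_sum by (simp add: mult.assoc)

lemma norm_le_componentwise:
  fixes a b :: "real^'n"
  assumes "\<And>i. \<bar>a $ i\<bar> \<le> \<bar>b $ i\<bar>"
  shows "norm a \<le> norm b"
proof -
  have "a \<bullet> a \<le> b \<bullet> b"
    unfolding inner_vec_sum
  proof (rule sum_mono)
    fix i
    have "\<bar>a $ i\<bar> * \<bar>a $ i\<bar> \<le> \<bar>b $ i\<bar> * \<bar>b $ i\<bar>" by (rule mult_mono) (use assms[of i] in auto)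
    then show "a $ i * a $ i \<le> b $ i * b $ i" by (metis abs_mult_self_eq)
  qed
  then show ?thesis by (simp add: norm_le)
qed

lemma norm_had_le:
  fixes a b :: "real^'n"
  assumes "\<And>i. \<bar>b $ i\<bar> \<le> 1"
  shows "norm (had a b) \<le> norm a"
  by (rule norm_le_componentwise) (use assms in \<open>simp add: abs_mult mult_left_le\<close>)

lemma inner_le_inner_vle:
  fixes a b c :: "real^'n"
  assumes "vle a b" "vle 0 c"
  shows "a \<bullet> c \<le> b \<bullet> c"
  unfolding inner_vec_sum
  using assms by (intro sum_mono) (auto simp: vle_def intro: mult_right_mono)

lemma norm_le_card_unit_cube: "y \<in> unit_cube \<Longrightarrow> norm (y :: real^'n) \<le> real CARD('n)"
proof -
  assume y: "y \<in> unit_cube"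
  have "norm y \<le> (\<Sum>i\<in>UNIV. \<bar>y $ i\<bar>)" by (rule norm_le_l1_cart)
  also have "\<dots> \<le> (\<Sum>i\<in>(UNIV::'n set). 1)" using y by (intro sum_mono) (auto simp: mem_unit_cube)
  finally show ?thesis by simp
qed

lemma norm_le_radius: "C \<subseteq> unit_cube \<Longrightarrow> y \<in> C \<Longrightarrow> norm y \<le> radius C"
  unfolding radius_def
  by (rule cSUP_upper) (use norm_le_card_unit_cube in \<open>auto intro!: bdd_aboveI2\<close>)

lemma unit_cube_eq_cbox: "unit_cube = cbox 0 (ones :: real^'n)"
  by (auto simp: mem_unit_cube interval_cbox_cart[symmetric] less_eq_vec_def)

lemma compact_unit_cube: "compact (unit_cube :: (real^'n) set)"
  by (simp add: unit_cube_eq_cbox)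

lemma ones_in_unit_cube: "ones \<in> unit_cube" and zero_in_unit_cube: "0 \<in> unit_cube"
  by (auto simp: mem_unit_cube)

lemma join_in_unit_cube:
  assumes "p \<in> unit_cube" "y \<in> unit_cube"
  shows "p + had y (ones - p) \<in> unit_cube" "vle p (p + had y (ones - p))"
proof -
  have "0 \<le> y $ i * (1 - p $ i)" "y $ i * (1 - p $ i) \<le> 1 - p $ i" for i
    using assms by (auto simp: mem_unit_cube mult_left_le_one_le)
  moreover have "0 \<le> p $ i" for i using assms(1) by (simp add: mem_unit_cube)
  ultimately show "p + had y (ones - p) \<in> unit_cube" "vle p (p + had y (ones - p))"
    by (auto simp: mem_unit_cube vle_def add_nonneg_nonneg) (smt (verit))
qed

lemma smooth_on_cube_nonneg:
  assumes "smooth_on_cube L (df :: real^'n \<Rightarrow> real^'n)"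
  shows "L \<ge> 0"
proof -
  have "norm (df 0 - df ones) \<le> L * norm (ones :: real^'n)"
    using assms ones_in_unit_cube zero_in_unit_cube unfolding smooth_on_cube_def by fastforce
  moreover have "(ones :: real^'n) \<noteq> 0" by (metis ones_nth vec_eq_iff zero_index zero_neq_one)
  ultimately show ?thesis by (metis norm_ge_zero order_trans zero_le_mult_iff not_le zero_less_norm_iff)
qed

lemma smooth_on_cube_continuous_on:
  assumes "smooth_on_cube L df"
  shows "continuous_on unit_cube df"
proof -
  have "L-lipschitz_on unit_cube df"
    using assms smooth_on_cube_nonneg[OF assms]
    by (auto simp: lipschitz_on_def smooth_on_cube_def dist_norm)
  then show ?thesis by (rule lipschitz_on_continuous_on)
qed

lemma smooth_on_cube_norm_le:
  assumes "smooth_on_cube L df" "y \<in> unit_cube"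
  shows "norm (df (y :: real^'n)) \<le> norm (df 0) + L * real CARD('n)"
proof -
  have "norm (df y - df 0) \<le> L * norm (y - 0)"
    using assms zero_in_unit_cube unfolding smooth_on_cube_def by blast
  also have "\<dots> \<le> L * real CARD('n)"
    using norm_le_card_unit_cube[OF assms(2)] smooth_on_cube_nonneg[OF assms(1)]
    by (intro mult_left_mono) auto
  finally show ?thesis using norm_triangle_sub[of "df y" "df 0"] by simp
qed

lemma DR_submodular_continuous_on: "DR_submodular f df \<Longrightarrow> continuous_on unit_cube f"
  unfolding DR_submodular_def
  by (intro differentiable_imp_continuous_on) (auto simp: differentiable_on_def differentiable_def)

section \<open>DR-submodular functions\<close>

lemma vle_between_in_unit_cube:
  assumes "p \<in> unit_cube" "q \<in> unit_cube" "vle p z" "vle z q"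
  shows "z \<in> unit_cube"
  using assms unfolding mem_unit_cube vle_def by (meson order_trans)

lemma vle_segment:
  assumes "vle p q" "0 \<le> s" "s \<le> 1"
  shows "vle p (p + s *\<^sub>R (q - p))" "vle (p + s *\<^sub>R (q - p)) q"
proof -
  have "0 \<le> s * (q $ i - p $ i)" "s * (q $ i - p $ i) \<le> q $ i - p $ i" for i
    using assms by (auto simp: vle_def mult_left_le_one_le)
  then show "vle p (p + s *\<^sub>R (q - p))" "vle (p + s *\<^sub>R (q - p)) q"
    by (auto simp: vle_def) (smt (verit))
qed

lemma DR_submodular_mean_value:
  fixes f :: "real^'n \<Rightarrow> real"
  assumes DR: "DR_submodular f df" and p: "p \<in> unit_cube" and q: "q \<in> unit_cube" and pq: "vle p q"
  obtains z where "vle p z" "vle z q" "f q - f p = df z \<bullet> (q - p)"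
proof -
  define \<gamma> where "\<gamma> = (\<lambda>s::real. p + s *\<^sub>R (q - p))"
  have \<gamma>_cube: "\<gamma> ` {0..1} \<subseteq> unit_cube"
    using vle_segment[OF pq] vle_between_in_unit_cube[OF p q] by (auto simp: \<gamma>_def)
  have "((\<lambda>s. f (\<gamma> s)) has_derivative (\<lambda>h. df (\<gamma> s) \<bullet> (h *\<^sub>R (q - p)))) (at s within {0..1})"
    if "s \<in> {0..1}" for s
  proof -
    have d1: "(\<gamma> has_derivative (\<lambda>h. h *\<^sub>R (q - p))) (at s within {0..1})"
      unfolding \<gamma>_def by (auto intro!: derivative_eq_intros)
    have d2: "\<And>x. x \<in> unit_cube \<Longrightarrow> (f has_derivative (\<lambda>h. df x \<bullet> h)) (at x within unit_cube)"
      using DR by (simp add: DR_submodular_def)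
    from has_derivative_in_compose2[OF d2 \<gamma>_cube that d1] show ?thesis by simp
  qed
  then obtain s where "s \<in> {0..1}" "f (\<gamma> 1) - f (\<gamma> 0) = df (\<gamma> s) \<bullet> ((1 - 0) *\<^sub>R (q - p))"
    using mvt_very_simple[of 0 1 "\<lambda>s. f (\<gamma> s)" "\<lambda>s h. df (\<gamma> s) \<bullet> (h *\<^sub>R (q - p))"] by auto
  with vle_segment[OF pq] show ?thesis
    by (intro that[of "\<gamma> s"]) (auto simp: \<gamma>_def)
qed

lemma DR_submodular_increment_bounds:
  fixes f :: "real^'n \<Rightarrow> real"
  assumes DR: "DR_submodular f df" and p: "p \<in> unit_cube" and q: "q \<in> unit_cube" and pq: "vle p q"
  shows "df q \<bullet> (q - p) \<le> f q - f p" "f q - f p \<le> df p \<bullet> (q - p)"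
proof -
  obtain z where pz: "vle p z" and zq: "vle z q" and mv: "f q - f p = df z \<bullet> (q - p)"
    using DR_submodular_mean_value[OF DR p q pq] .
  have z: "z \<in> unit_cube" by (rule vle_between_in_unit_cube[OF p q pz zq])
  have antitone: "vle (df a) (df b)" if "a \<in> unit_cube" "b \<in> unit_cube" "vle b a" for a b
    using DR that by (simp add: DR_submodular_def)
  have nonneg: "vle 0 (q - p)" using pq by (simp add: vle_def)
  show "df q \<bullet> (q - p) \<le> f q - f p"
    unfolding mv by (rule inner_le_inner_vle[OF antitone[OF q z zq] nonneg])
  show "f q - f p \<le> df p \<bullet> (q - p)"
    unfolding mv by (rule inner_le_inner_vle[OF antitone[OF z p pz] nonneg])
qed

lemma DR_submodular_segment_lower:
  fixes f :: "real^'n \<Rightarrow> real"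
  assumes DR: "DR_submodular f df" and p: "p \<in> unit_cube" and d: "vle 0 d"
    and pd: "p + d \<in> unit_cube" and th: "0 \<le> \<theta>" "\<theta> \<le> 1"
    and fnn: "\<And>y. y \<in> unit_cube \<Longrightarrow> f y \<ge> 0"
  shows "(1 - \<theta>) * f p \<le> f (p + \<theta> *\<^sub>R d)"
proof -
  define m where "m = p + \<theta> *\<^sub>R d"
  have "vle p (p + d)" using d by (simp add: vle_def)
  from vle_segment[OF this th] have pm: "vle p m" and mpd: "vle m (p + d)"
    by (simp_all add: m_def)
  have m: "m \<in> unit_cube" by (rule vle_between_in_unit_cube[OF p pd pm mpd])
  have "df m \<bullet> (m - p) \<le> f m - f p" by (rule DR_submodular_increment_bounds(1)[OF DR p m pm])
  moreover have "m - p = \<theta> *\<^sub>R d" by (simp add: m_def)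
  ultimately have lower: "\<theta> * (df m \<bullet> d) \<le> f m - f p" by simp
  have "f (p + d) - f m \<le> df m \<bullet> (p + d - m)" by (rule DR_submodular_increment_bounds(2)[OF DR m pd mpd])
  moreover have "p + d - m = (1 - \<theta>) *\<^sub>R d" by (simp add: m_def algebra_simps)
  ultimately have upper: "f (p + d) - f m \<le> (1 - \<theta>) * (df m \<bullet> d)" by simp
  \<comment> \<open>eliminate \<open>df m \<bullet> d\<close> between the two bounds, then drop \<open>\<theta> f(p + d) \<ge> 0\<close>\<close>
  have "(1 - \<theta>) * (\<theta> * (df m \<bullet> d)) \<le> (1 - \<theta>) * (f m - f p)"
    using lower th by (intro mult_left_mono) auto
  moreover have "\<theta> * (f (p + d) - f m) \<le> \<theta> * ((1 - \<theta>) * (df m \<bullet> d))"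
    using upper th by (intro mult_left_mono) auto
  moreover have "\<theta> * f (p + d) \<ge> 0" using fnn[OF pd] th by simp
  ultimately have "(1 - \<theta>) * f p \<le> f m"
    by (simp add: algebra_simps)
  then show ?thesis by (simp add: m_def)
qed

text \<open>The measured-greedy bound \<open>f(p \<or> y) \<ge> (1 - max\<^sub>i p\<^sub>i) f(y)\<close>, with \<open>p + y \<odot> (1 - p)\<close> in place of the join.\<close>

lemma DR_submodular_join_lower:
  fixes f :: "real^'n \<Rightarrow> real"
  assumes DR: "DR_submodular f df" and fnn: "\<And>z. z \<in> unit_cube \<Longrightarrow> f z \<ge> 0"
    and p: "p \<in> unit_cube" and y: "y \<in> unit_cube"
    and p_le: "\<And>i. p $ i \<le> \<theta>" and \<theta>1: "\<theta> \<le> 1"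
  shows "(1 - \<theta>) * f y \<le> f (p + had y (ones - p))"
proof (cases "\<theta> = 0")
  case True
  then have "p = 0" using p p_le by (metis mem_unit_cube order_antisym vec_eq_iff zero_index)
  then show ?thesis using True by (simp add: had_def)
next
  case False
  have pi: "0 \<le> p $ i" "p $ i \<le> 1" and yi: "0 \<le> y $ i" "y $ i \<le> 1" for i
    using p y by (auto simp: mem_unit_cube)
  have \<theta>0: "\<theta> > 0" using False p_le[of undefined] pi[of undefined] by linarith
  define d where "d = (1 / \<theta>) *\<^sub>R had p (ones - y)"
  have di: "d $ i = (p $ i / \<theta>) * (1 - y $ i)" for i by (simp add: d_def)
  have d0: "vle 0 d" using pi yi \<theta>0 by (simp add: vle_def di)
  have "d $ i \<le> 1 - y $ i" for i
    unfolding di using p_le[of i] \<theta>0 yi[of i] pi[of i] by (intro mult_left_le_one_le) auto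
  moreover have "0 \<le> d $ i" for i using d0 by (simp add: vle_def)
  ultimately have yd: "y + d \<in> unit_cube" using yi by (auto simp: mem_unit_cube add_nonneg_nonneg) (smt (verit))
  have "p + had y (ones - p) = y + \<theta> *\<^sub>R d"
    using \<theta>0 by (simp add: vec_eq_iff di field_simps)
  then show ?thesis
    using DR_submodular_segment_lower[OF DR y d0 yd _ \<theta>1 fnn] \<theta>0 by simp
qed

section \<open>Iterates, step sizes and numerical estimates\<close>

lemma mfw_x_complement_bounds:
  assumes K1: "K \<ge> 1" and v: "\<And>k. k \<in> {1..K} \<Longrightarrow> v k \<in> unit_cube" and kK: "k \<le> K"
  shows "(1 - 1 / real K) ^ k \<le> 1 - mfw_x K v k $ i \<and> 1 - mfw_x K v k $ i \<le> 1"
  using kK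
proof (induction k)
  case 0
  then show ?case by simp
next
  case (Suc k)
  let ?a = "1 - mfw_x K v k $ i" and ?b = "1 - (1 / real K) * v (Suc k) $ i"
  have IH: "(1 - 1 / real K) ^ k \<le> ?a" "?a \<le> 1" using Suc by auto
  have vi: "0 \<le> v (Suc k) $ i" "v (Suc k) $ i \<le> 1" using v[of "Suc k"] Suc.prems by (auto simp: mem_unit_cube)
  have rho: "0 \<le> 1 / real K" "1 / real K \<le> 1" using K1 by auto
  have "(1 / real K) * v (Suc k) $ i \<le> 1 / real K" using vi rho by (intro mult_left_le) auto
  moreover have "0 \<le> (1 / real K) * v (Suc k) $ i" using vi rho by simp
  ultimately have b: "1 - 1 / real K \<le> ?b" "?b \<le> 1" by linarith+
  have eq: "1 - mfw_x K v (Suc k) $ i = ?a * ?b" using K1 by (simp add: field_simps)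
  have pk: "0 \<le> (1 - 1 / real K) ^ k" using rho by simp
  have a0: "0 \<le> ?a" using IH pk by linarith
  have "(1 - 1 / real K) ^ Suc k = (1 - 1 / real K) ^ k * (1 - 1 / real K)" by (simp add: mult.commute)
  also have "\<dots> \<le> ?a * ?b" using IH b pk rho a0 by (intro mult_mono) auto
  finally have lo: "(1 - 1 / real K) ^ Suc k \<le> ?a * ?b" .
  have "?a * ?b \<le> 1" using IH b a0 rho by (intro mult_le_one) auto
  then show ?case using lo eq by simp
qed

lemma mfw_x_in_unit_cube:
  assumes "K \<ge> 1" and "\<And>k. k \<in> {1..K} \<Longrightarrow> v k \<in> unit_cube" and "k \<le> K"
  shows "mfw_x K v k \<in> unit_cube"
proof -
  have "0 \<le> (1 - 1 / real K) ^ k" using assms(1) by simp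
  with mfw_x_complement_bounds[where K=K and v=v, OF assms] have "0 \<le> mfw_x K v k $ i \<and> mfw_x K v k $ i \<le> 1" for i
    by (smt (verit))
  then show ?thesis unfolding mem_unit_cube by blast
qed

lemma mfw_x_step:
  assumes K1: "K \<ge> 1" and v: "\<And>k. k \<in> {1..K} \<Longrightarrow> v k \<in> unit_cube" and kK: "Suc k \<le> K"
  shows "norm (mfw_x K v (Suc k) - mfw_x K v k) \<le> (1 / real K) * norm (v (Suc k))"
    and "vle (mfw_x K v k) (mfw_x K v (Suc k))"
proof -
  have x: "mfw_x K v k \<in> unit_cube" using mfw_x_in_unit_cube[OF K1 v] kK by simp
  have "norm (had (v (Suc k)) (ones - mfw_x K v k)) \<le> norm (v (Suc k))"
    by (rule norm_had_le) (use x in \<open>auto simp: mem_unit_cube\<close>)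
  then show "norm (mfw_x K v (Suc k) - mfw_x K v k) \<le> (1 / real K) * norm (v (Suc k))"
    using K1 by (simp add: divide_right_mono)
  show "vle (mfw_x K v k) (mfw_x K v (Suc k))"
    using x v[of "Suc k"] kK by (auto simp: vle_def mem_unit_cube)
qed

lemma powr_two_thirds_cube:
  fixes x :: real
  assumes "0 < x"
  shows "(x powr (2/3)) ^ 3 = x\<^sup>2"
proof -
  have "(x powr (2/3)) ^ 3 = (x powr (2/3)) powr (3::real)"
    using assms by (subst powr_numeral) auto
  also have "\<dots> = x powr (2::real)" by (simp add: powr_powr)
  also have "\<dots> = x\<^sup>2" using assms by (subst powr_numeral) auto
  finally show ?thesis .
qed

lemma powr_two_thirds_le:
  fixes x y :: real
  assumes "0 < x" "0 \<le> y" "x\<^sup>2 \<le> y ^ 3"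
  shows "x powr (2/3) \<le> y"
proof (rule ccontr)
  assume "\<not> x powr (2/3) \<le> y"
  then have "y ^ 3 < (x powr (2/3)) ^ 3" using assms by (intro power_strict_mono) auto
  then show False using assms powr_two_thirds_cube[OF assms(1)] by simp
qed

lemma le_powr_two_thirds:
  fixes x y :: real
  assumes "0 < x" "y ^ 3 \<le> x\<^sup>2"
  shows "y \<le> x powr (2/3)"
proof (rule ccontr)
  assume "\<not> y \<le> x powr (2/3)"
  then have "(x powr (2/3)) ^ 3 < y ^ 3" by (intro power_strict_mono) auto
  then show False using assms powr_two_thirds_cube[OF assms(1)] by simp
qed

lemma mfw_eta_pos: "mfw_eta k > 0"
  by (simp add: mfw_eta_def)

lemma mfw_eta_antimono: "j \<le> k \<Longrightarrow> mfw_eta k \<le> mfw_eta j"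
  unfolding mfw_eta_def by (intro divide_left_mono powr_mono2) auto

lemma mfw_eta_le_one: "mfw_eta k \<le> 1"
proof -
  have "(2::real) ^ 3 \<le> (real k + 3)\<^sup>2" by (simp add: power2_eq_square algebra_simps)
  then have "2 \<le> (real k + 3) powr (2/3)" by (intro le_powr_two_thirds) auto
  then show ?thesis by (simp add: mfw_eta_def)
qed

lemma damped_recurrence_sum_bound:
  fixes u :: "nat \<Rightarrow> real"
  assumes K1: "K \<ge> 1" and u0: "\<And>k. u k \<ge> 0" and e: "0 \<le> \<eta>" "\<eta> \<le> 1"
    and rec: "\<And>k. 2 \<le> k \<Longrightarrow> k \<le> K \<Longrightarrow> u k \<le> (1 - \<eta>) * u (k - 1) + c"
  shows "\<eta> * (\<Sum>k=1..K. u k) \<le> u 1 + real (K - 1) * c"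
proof -
  have partial: "\<eta> * (\<Sum>k=1..<m. u k) + u m \<le> u 1 + real (m - 1) * c" if "1 \<le> m" "m \<le> K" for m
    using that
  proof (induction m rule: dec_induct)
    case base
    then show ?case by simp
  next
    case (step n)
    have r: "u (Suc n) \<le> (1 - \<eta>) * u n + c" using rec[of "Suc n"] step by simp
    have "\<eta> * (\<Sum>k=1..<Suc n. u k) + u (Suc n) = \<eta> * (\<Sum>k=1..<n. u k) + \<eta> * u n + u (Suc n)"
      using step by (simp add: distrib_left)
    also have "\<dots> \<le> \<eta> * (\<Sum>k=1..<n. u k) + u n + c" using r by (simp add: algebra_simps)
    also have "\<dots> \<le> u 1 + real (n - 1) * c + c" using step by simp
    also have "\<dots> = u 1 + real (Suc n - 1) * c" using step by (simp add: algebra_simps of_nat_diff)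
    finally show ?case .
  qed
  have "\<eta> * (\<Sum>k=1..K. u k) = \<eta> * (\<Sum>k=1..<K. u k) + \<eta> * u K"
    using K1 by (simp add: atLeastLessThanSuc_atLeastAtMost[symmetric] distrib_left)
  also have "\<dots> \<le> \<eta> * (\<Sum>k=1..<K. u k) + u K" using e u0[of K] by (simp add: mult_left_le_one_le)
  also have "\<dots> \<le> u 1 + real (K - 1) * c" using partial[of K] K1 by simp
  finally show ?thesis .
qed

lemma exp_neg_one_le_power:
  assumes K1: "K \<ge> (1::nat)"
  shows "exp (-1) \<le> (1 - 1 / real K) ^ (K - 1)"
proof (cases "K = 1")
  case True
  then show ?thesis by simp
next
  case False
  define m where "m = K - 1"
  have mp: "real m > 0" using K1 False by (simp add: m_def)
  have "(1 + 1 / real m) ^ m \<le> exp (1 / real m) ^ m"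
    by (intro power_mono) (auto simp: exp_ge_add_one_self add_nonneg_nonneg)
  also have "\<dots> = exp 1" using mp by (simp add: exp_of_nat_mult[symmetric])
  finally have A: "(1 + 1 / real m) ^ m \<le> exp 1" .
  have eq: "1 - 1 / real K = 1 / (1 + 1 / real m)"
    using mp K1 by (simp add: m_def of_nat_diff field_simps)
  have pos: "0 < (1 + 1 / real m) ^ m" using mp by (simp add: add_pos_pos)
  have "exp (-1::real) = 1 / exp 1" by (simp add: exp_minus inverse_eq_divide)
  also have "\<dots> \<le> 1 / (1 + 1 / real m) ^ m" using A pos by (intro divide_left_mono) auto
  also have "\<dots> = (1 - 1 / real K) ^ (K - 1)" by (simp add: eq m_def power_one_over)
  finally show ?thesis .
qed

lemma linear_le_quadratic:
  fixes s \<beta> :: real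
  assumes "0 \<le> \<beta>" "\<beta> \<le> 1.7"
  shows "\<beta> * s \<le> (3 * s^2 + 1) / 2"
proof -
  have eq: "(3 * s^2 + 1) / 2 - \<beta> * s = 3/2 * (s - \<beta>/3)^2 + (1/2 - \<beta>^2/6)"
    by (simp add: power2_eq_square field_simps)
  have "\<beta>^2 \<le> 1.7^2" using assms by (intro power_mono) auto
  then have "\<beta>^2 \<le> 2.89" by (simp add: power2_eq_square)
  then have "0 \<le> 1/2 - \<beta>^2/6" by simp
  moreover have "0 \<le> 3/2 * (s - \<beta>/3)^2" by simp
  ultimately show ?thesis using eq by linarith
qed

text \<open>Here \<open>s = sqrt N\<close>: the two lower bounds on \<open>N\<^sub>0\<close> give \<open>1.587 G \<le> s\<close> and \<open>2.449 L r \<le> s\<close>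
  (\<open>1.587 < 4 powr (1/3)\<close>, \<open>2.449 < sqrt 6\<close>), while \<open>a\<close>, \<open>w\<close>, \<open>R\<close>, \<open>c2\<close> stand for \<open>1 - mfw_eta 1\<close>, \<open>sqrt 2 / 2\<close>,
  \<open>(K + 3) powr (2/3)\<close> and \<open>K powr (2/3)\<close>.\<close>

lemma error_coefficient_bound_K_eq_1:
  fixes G p s a w R :: real
  assumes "G \<ge> 0" "p \<ge> 0" "1.587 * G \<le> s" "2.449 * p \<le> s"
    "0 \<le> a" "a \<le> 0.207" "0 \<le> w" "w \<le> 0.7072" "0 \<le> R" "R \<le> 2.5202"
  shows "w * R * (a * G) + G + 1.5 * p \<le> (3 * s^2 + 1) / 2"
proof -
  have h1: "w * R \<le> 0.7072 * 2.5202" using assms by (intro mult_mono) auto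
  have h2: "(w * R) * a \<le> (0.7072 * 2.5202) * 0.207" using assms h1 by (intro mult_mono) auto
  have h3: "(w * R * a) * G \<le> 0.369 * G" using h2 assms by (intro mult_right_mono) auto
  have "w * R * (a * G) + G + 1.5 * p \<le> 1.48 * s" using h3 assms by (simp add: mult.assoc)
  also have "\<dots> \<le> (3 * s^2 + 1) / 2" by (rule linear_le_quadratic) auto
  finally show ?thesis .
qed

lemma error_coefficient_bound_K_ge_2:
  fixes G p s a w R c2 t :: real
  assumes "G \<ge> 0" "p \<ge> 0" "1.587 * G \<le> s" "2.449 * p \<le> s"
    "0 \<le> a" "a \<le> 0.207" "0 \<le> w" "w \<le> 0.7072" "0 \<le> R" "R \<le> 1.85 * c2" "c2 \<ge> 1.587"
    "0 \<le> t" "t \<le> 1"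
  shows "w * R * (a * G + t * p) + G + 1.5 * p \<le> (3 * s^2 + 1) / 2 * c2"
proof -
  have c0: "c2 \<ge> 0" using assms by simp
  have h1: "w * R \<le> 0.7072 * (1.85 * c2)" using assms c0 by (intro mult_mono) auto
  have ag: "a * G \<le> 0.207 * G" using assms by (intro mult_right_mono) auto
  have tp: "t * p \<le> p" using assms by (simp add: mult_left_le_one_le)
  have h2: "(w * R) * (a * G + t * p) \<le> (0.7072 * (1.85 * c2)) * (0.207 * G + p)"
    using h1 ag tp assms by (intro mult_mono) auto
  have h3: "G + 1.5 * p \<le> (0.6302 * c2) * (G + 1.5 * p)"
  proof -
    have "1 \<le> 0.6302 * c2" using assms by simp
    moreover have "0 \<le> G + 1.5 * p" using assms by simp
    ultimately have "1 * (G + 1.5 * p) \<le> (0.6302 * c2) * (G + 1.5 * p)" by (intro mult_right_mono)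
    then show ?thesis by simp
  qed
  have "w * R * (a * G + t * p) + G + 1.5 * p \<le> (0.7072 * (1.85 * c2)) * (0.207 * G + p) + (0.6302 * c2) * (G + 1.5 * p)"
    using h2 h3 by linarith
  also have "\<dots> = c2 * (0.90102224 * G + 2.25362 * p)" by (simp add: field_simps)
  also have "\<dots> \<le> c2 * (1.49 * s)" using assms c0 by (intro mult_left_mono) auto
  also have "\<dots> \<le> c2 * ((3 * s^2 + 1) / 2)" using c0 by (intro mult_left_mono linear_le_quadratic) auto
  finally show ?thesis by (simp add: mult.commute)
qed

lemma four_powr_two_thirds_bounds:
  shows "2.5186 \<le> (4::real) powr (2/3)" and "(4::real) powr (2/3) \<le> 2.5202"
  by (rule le_powr_two_thirds powr_two_thirds_le; simp add: power_divide)+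

lemma powr_two_thirds_ge_of_ge_two: "K \<ge> 2 \<Longrightarrow> 1.587 \<le> real K powr (2/3)"
proof -
  assume K2: "K \<ge> 2"
  have "(2::real)\<^sup>2 \<le> (real K)\<^sup>2" using K2 by (intro power_mono) auto
  moreover have "(1.587::real) ^ 3 \<le> 4" by (simp add: power_divide)
  ultimately show ?thesis using K2 by (intro le_powr_two_thirds) auto
qed

lemma shifted_powr_two_thirds_le: "K \<ge> 2 \<Longrightarrow> (real K + 3) powr (2/3) \<le> 1.85 * real K powr (2/3)"
proof -
  assume K2: "K \<ge> 2"
  have "((real K + 3) / real K)\<^sup>2 \<le> 2.5\<^sup>2"
    using K2 by (intro power_mono) (auto simp: field_simps)
  also have "(2.5::real)\<^sup>2 \<le> 1.85 ^ 3" by (simp add: power_divide)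
  finally have "((real K + 3) / real K) powr (2/3) \<le> 1.85"
    using K2 by (intro powr_two_thirds_le) auto
  then show ?thesis using K2 by (simp add: powr_divide divide_le_eq)
qed

lemma momentum_error_coefficient_le:
  fixes K :: nat and G p s :: real
  assumes K1: "K \<ge> 1" and G0: "G \<ge> 0" and p0: "p \<ge> 0"
    and Gs: "1.587 * G \<le> s" and ps: "2.449 * p \<le> s"
  shows "sqrt 2 / 2 * (real K + 3) powr (2/3) * ((1 - mfw_eta 1) * G + real (K - 1) * (1 / real K) * p)
           + G + 1.5 * p \<le> real K powr (2/3) * ((3 * s\<^sup>2 + 1) / 2)"
proof -
  define a where "a = 1 - mfw_eta 1"
  define w where "w = sqrt 2 / 2"
  define t where "t = real (K - 1) * (1 / real K)"
  note four = four_powr_two_thirds_bounds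
  have a0: "0 \<le> a" using mfw_eta_le_one[of 1] by (simp add: a_def)
  have "2 / 2.5202 \<le> 2 / (4::real) powr (2/3)" using four by (intro divide_left_mono) auto
  then have a1: "a \<le> 0.207" by (simp add: a_def mfw_eta_def)
  have w0: "0 \<le> w" by (simp add: w_def)
  have "sqrt 2 \<le> sqrt (1.4144\<^sup>2)" by (rule real_sqrt_le_mono) (simp add: power2_eq_square)
  then have w1: "w \<le> 0.7072" by (simp add: w_def)
  have t0: "0 \<le> t" and t1: "t \<le> 1" using K1 by (simp_all add: t_def field_simps)
  show ?thesis
  proof (cases "K = 1")
    case True
    then show ?thesis
      using error_coefficient_bound_K_eq_1[OF G0 p0 Gs ps a0 a1 w0 w1, of "4 powr (2/3)"] four
      by (simp add: a_def w_def mult.assoc)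
  next
    case False
    then have K2: "K \<ge> 2" using K1 by simp
    show ?thesis
      using error_coefficient_bound_K_ge_2[OF G0 p0 Gs ps a0 a1 w0 w1 _ shifted_powr_two_thirds_le[OF K2]
          powr_two_thirds_ge_of_ge_two[OF K2] t0 t1]
      by (simp add: a_def w_def t_def mult.commute mult.left_commute)
  qed
qed

lemma error_terms_le:
  fixes K :: nat and G L r N :: real
  assumes K1: "K \<ge> 1" and G0: "G \<ge> 0" and L0: "L \<ge> 0" and r0: "r \<ge> 0"
    and NG: "4 powr (2/3) * G\<^sup>2 \<le> N" and NL: "6 * (L * r)\<^sup>2 \<le> N"
  shows "(1 / real K) * (sqrt 2 * r * (((1 - mfw_eta 1) * G + real (K - 1) * (L * ((1 / real K) * r))) / mfw_eta K))
          + (1 / real K) * (r * (G + L * r)) + L * (1 / real K) * r\<^sup>2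
        \<le> L * r\<^sup>2 / (2 * real K) + r / 2 * (3 * N + 1) / real K powr (1/3)"
proof -
  define s where "s = sqrt N"
  define coeff where "coeff = sqrt 2 / 2 * (real K + 3) powr (2/3)
      * ((1 - mfw_eta 1) * G + real (K - 1) * (1 / real K) * (L * r)) + G + 1.5 * (L * r)"
  have Kp: "real K > 0" using K1 by simp
  have "0 \<le> 6 * (L * r)\<^sup>2" by simp
  then have "N \<ge> 0" using NL by linarith
  then have s0: "s \<ge> 0" and ss: "s\<^sup>2 = N" by (simp_all add: s_def)
  have "(1.587 * G)\<^sup>2 \<le> 2.5186 * G\<^sup>2" by (simp add: power_mult_distrib power_divide)
  also have "\<dots> \<le> s\<^sup>2"
    using NG ss four_powr_two_thirds_bounds(1) mult_right_mono[of _ _ "G\<^sup>2"] by fastforce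
  finally have Gs: "1.587 * G \<le> s" using s0 by (rule power2_le_imp_le)
  have "(2.449 * (L * r))\<^sup>2 \<le> 6 * (L * r)\<^sup>2" by (simp add: power_mult_distrib power_divide)
  also have "\<dots> \<le> s\<^sup>2" using NL ss by simp
  finally have ps: "2.449 * (L * r) \<le> s" using s0 by (rule power2_le_imp_le)
  have lhs: "(1 / real K) * (sqrt 2 * r * (((1 - mfw_eta 1) * G + real (K - 1) * (L * ((1 / real K) * r))) / mfw_eta K))
          + (1 / real K) * (r * (G + L * r)) + L * (1 / real K) * r\<^sup>2
        = r * (1 / real K) * coeff + L * r\<^sup>2 / (2 * real K)"
    using Kp by (simp add: coeff_def mfw_eta_def field_simps power2_eq_square)
  have "real K powr (1/3) * real K powr (2/3) = real K"
    using Kp by (simp flip: powr_add)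
  then have rhs: "r / 2 * (3 * N + 1) / real K powr (1/3)
      = r * (1 / real K) * (real K powr (2/3) * ((3 * s\<^sup>2 + 1) / 2))"
    using Kp by (simp add: ss field_simps)
  have "coeff \<le> real K powr (2/3) * ((3 * s\<^sup>2 + 1) / 2)"
    unfolding coeff_def using momentum_error_coefficient_le[OF K1 G0 _ Gs ps] L0 r0 by simp
  then have "r * (1 / real K) * coeff \<le> r * (1 / real K) * (real K powr (2/3) * ((3 * s\<^sup>2 + 1) / 2))"
    using r0 Kp by (intro mult_left_mono) auto
  then show ?thesis unfolding lhs rhs by simp
qed

section \<open>One round of Meta-MFW\<close>

declare mfw_x.simps(2) [simp del]

locale mfw_round =
  fixes f :: "real^'n \<Rightarrow> real" and df :: "real^'n \<Rightarrow> real^'n" and K :: nat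
    and v :: "nat \<Rightarrow> real^'n" and xs :: "real^'n" and L r :: real
  assumes K1: "K \<ge> 1" and DR: "DR_submodular f df" and smooth: "smooth_on_cube L df"
    and f_nonneg: "\<And>y. y \<in> unit_cube \<Longrightarrow> f y \<ge> 0"
    and v_cube: "\<And>k. k \<in> {1..K} \<Longrightarrow> v k \<in> unit_cube"
    and v_norm: "\<And>k. k \<in> {1..K} \<Longrightarrow> norm (v k) \<le> r"
    and xs_cube: "xs \<in> unit_cube" and xs_norm: "norm xs \<le> r"
begin

abbreviation X :: "nat \<Rightarrow> real^'n" where "X k \<equiv> mfw_x K v k"

lemma L_nonneg: "L \<ge> 0"
  by (rule smooth_on_cube_nonneg[OF smooth])

lemma r_nonneg: "r \<ge> 0"
  using xs_norm norm_ge_zero order_trans by blast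

lemma inverse_K_bounds: "0 < 1 / real K" "1 / real K \<le> 1"
  using K1 by auto

lemma X_in_unit_cube: "k \<le> K \<Longrightarrow> X k \<in> unit_cube"
  by (rule mfw_x_in_unit_cube[where K=K and v=v]) (use K1 v_cube in auto)

lemma X_step_norm: "Suc j \<le> K \<Longrightarrow> norm (X (Suc j) - X j) \<le> (1 / real K) * r"
proof -
  assume j: "Suc j \<le> K"
  have "norm (X (Suc j) - X j) \<le> (1 / real K) * norm (v (Suc j))"
    using mfw_x_step(1)[where K=K and v=v, OF K1 v_cube j] .
  also have "\<dots> \<le> (1 / real K) * r" using v_norm[of "Suc j"] j inverse_K_bounds by (intro mult_left_mono) auto
  finally show ?thesis .
qed

lemma df_lipschitz: "p \<in> unit_cube \<Longrightarrow> q \<in> unit_cube \<Longrightarrow> norm (df p - df q) \<le> L * norm (p - q)"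
  using smooth by (simp add: smooth_on_cube_def)

lemma inner_df_le:
  assumes "p \<in> unit_cube" "q \<in> unit_cube"
  shows "df p \<bullet> w \<le> df q \<bullet> w + L * norm (p - q) * norm w"
proof -
  have "(df p - df q) \<bullet> w \<le> norm (df p - df q) * norm w" by (rule norm_cauchy_schwarz)
  also have "\<dots> \<le> L * norm (p - q) * norm w"
    using df_lipschitz[OF assms] by (intro mult_right_mono) auto
  finally show ?thesis by (simp add: inner_diff_left)
qed

lemma value_step_lower:
  assumes j: "Suc j \<le> K"
  shows "f (X (Suc j)) \<ge> (1 - 1 / real K) * f (X j) + (1 / real K) * (1 - 1 / real K) ^ j * f xs
          + (1 / real K) * (had (df (X (Suc j))) (ones - X j) \<bullet> (v (Suc j) - xs))
          - L * (1 / real K)\<^sup>2 * r\<^sup>2"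
proof -
  define \<rho> where "\<rho> = 1 / real K"
  define P where "P = X j"
  define Q where "Q = X (Suc j)"
  define w where "w = had xs (ones - P)"
  have P: "P \<in> unit_cube" and Q: "Q \<in> unit_cube" using X_in_unit_cube j by (simp_all add: P_def Q_def)
  have \<rho>: "0 \<le> \<rho>" "\<rho> \<le> 1" using inverse_K_bounds by (simp_all add: \<rho>_def)
  have "vle P Q" using mfw_x_step(2)[where K=K and v=v, OF K1 v_cube j] by (simp add: P_def Q_def)
  then have "df Q \<bullet> (Q - P) \<le> f Q - f P" by (rule DR_submodular_increment_bounds(1)[OF DR P Q])
  moreover have "df Q \<bullet> (Q - P) = \<rho> * (had (df Q) (ones - P) \<bullet> v (Suc j))"
    unfolding inner_vec_sum by (simp add: P_def Q_def \<rho>_def mfw_x.simps(2) sum_distrib_left mult_ac)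
  moreover have "had (df Q) (ones - P) \<bullet> xs = df Q \<bullet> w"
    unfolding w_def inner_vec_sum by (simp add: mult_ac)
  ultimately have progress:
    "f Q \<ge> f P + \<rho> * (had (df Q) (ones - P) \<bullet> (v (Suc j) - xs)) + \<rho> * (df Q \<bullet> w)"
    by (simp add: inner_diff_right algebra_simps)
  \<comment> \<open>compare with the reference point \<open>P + xs \<odot> (1 - P)\<close>, which dominates \<open>P\<close>\<close>
  have "P $ i \<le> 1 - (1 - \<rho>) ^ j" for i
    using mfw_x_complement_bounds[where K=K and v=v and k=j and i=i] K1 v_cube j by (simp add: P_def \<rho>_def)
  then have "(1 - (1 - (1 - \<rho>) ^ j)) * f xs \<le> f (P + w)"
    unfolding w_def using \<rho> by (intro DR_submodular_join_lower[OF DR f_nonneg P xs_cube]) auto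
  moreover have "f (P + w) - f P \<le> df P \<bullet> w"
    using DR_submodular_increment_bounds(2)[OF DR P join_in_unit_cube[OF P xs_cube]] by (simp add: w_def)
  moreover have "df P \<bullet> w \<le> df Q \<bullet> w + L * (\<rho> * r) * r"
  proof -
    have "norm w \<le> r"
      using norm_had_le[where a=xs and b="ones - P"] P xs_norm by (auto simp: w_def mem_unit_cube)
    moreover have "norm (P - Q) \<le> \<rho> * r"
      using X_step_norm[OF j] by (simp add: P_def Q_def \<rho>_def norm_minus_commute)
    ultimately have "L * norm (P - Q) * norm w \<le> L * (\<rho> * r) * r"
      using L_nonneg r_nonneg \<rho> by (intro mult_mono) (auto intro: mult_left_mono)
    then show ?thesis using inner_df_le[OF P Q, of w] by simp
  qed
  ultimately have "\<rho> * ((1 - \<rho>) ^ j * f xs - f P) \<le> \<rho> * (df Q \<bullet> w + L * (\<rho> * r) * r)"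
    using \<rho> by (intro mult_left_mono) auto
  with progress show ?thesis
    by (simp add: P_def Q_def \<rho>_def algebra_simps power2_eq_square)
qed

definition gain :: "nat \<Rightarrow> real" where
  "gain k = had (df (X k)) (ones - X (k - 1)) \<bullet> (v k - xs)"

lemma value_unrolled_lower:
  assumes "m \<le> K"
  shows "f (X m) \<ge> (1 - 1 / real K) ^ m * f (X 0) + real m * (1 / real K) * (1 - 1 / real K) ^ (m - 1) * f xs
           + (\<Sum>k=1..m. (1 - 1 / real K) ^ (m - k) * (1 / real K) * gain k) - real m * L * (1 / real K)\<^sup>2 * r\<^sup>2"
  using assms
proof (induction m)
  case 0
  then show ?case by simp
next
  case (Suc m)
  define c where "c = 1 - 1 / real K"
  define \<rho> where "\<rho> = 1 / real K"
  define E where "E = L * \<rho>\<^sup>2 * r\<^sup>2"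
  define S where "S m' = (\<Sum>k=1..m'. c ^ (m' - k) * \<rho> * gain k)" for m'
  have c: "0 \<le> c" "c \<le> 1" using inverse_K_bounds by (auto simp: c_def)
  have E: "E \<ge> 0" using L_nonneg by (simp add: E_def)
  have IH: "f (X m) \<ge> c ^ m * f (X 0) + real m * \<rho> * c ^ (m - 1) * f xs + S m - real m * E"
    using Suc by (simp add: c_def \<rho>_def E_def S_def)
  have step: "f (X (Suc m)) \<ge> c * f (X m) + \<rho> * c ^ m * f xs + \<rho> * gain (Suc m) - E"
    using value_step_lower[OF Suc.prems] by (simp add: c_def \<rho>_def E_def gain_def)
  have shift: "c * (real m * \<rho> * c ^ (m - 1) * f xs) = real m * \<rho> * c ^ m * f xs"
    by (cases m) auto
  have sum_step: "c * S m = S (Suc m) - \<rho> * gain (Suc m)"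
    unfolding S_def sum_distrib_left by (simp add: Suc_diff_le mult_ac)
  have "c * f (X m) \<ge> c * (c ^ m * f (X 0) + real m * \<rho> * c ^ (m - 1) * f xs + S m - real m * E)"
    using IH c by (intro mult_left_mono) auto
  also have "c * (c ^ m * f (X 0) + real m * \<rho> * c ^ (m - 1) * f xs + S m - real m * E)
      = c ^ Suc m * f (X 0) + c * (real m * \<rho> * c ^ (m - 1) * f xs) + c * S m - c * (real m * E)"
    by (simp add: ring_distribs)
  also have "\<dots> = c ^ Suc m * f (X 0) + real m * \<rho> * c ^ m * f xs
      + (S (Suc m) - \<rho> * gain (Suc m)) - c * (real m * E)"
    unfolding shift sum_step ..
  finally have "c * f (X m) \<ge> \<dots>" .
  moreover have "c * (real m * E) \<le> real m * E" using c E by (simp add: mult_left_le_one_le)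
  ultimately have "f (X (Suc m)) \<ge> c ^ Suc m * f (X 0) + real (Suc m) * \<rho> * c ^ (Suc m - 1) * f xs
      + S (Suc m) - real (Suc m) * E"
    using step by (simp add: ring_distribs)
  then show ?case by (simp add: c_def \<rho>_def E_def S_def)
qed

text \<open>The momentum estimate built from exact gradients at the iterates; its distance to the
  current gradient is controlled by smoothness alone.\<close>

abbreviation exact_momentum :: "nat \<Rightarrow> real^'n" where
  "exact_momentum k \<equiv> mfw_g mfw_eta (\<lambda>j. df (X j)) k"

definition momentum_error :: "nat \<Rightarrow> real^'n" where
  "momentum_error k = df (X k) - exact_momentum k"

definition momentum_gain :: "nat \<Rightarrow> real" where
  "momentum_gain k = had (exact_momentum k) (ones - X k) \<bullet> (v k - xs)"

definition gain_error :: "nat \<Rightarrow> real" where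
  "gain_error k = sqrt 2 * r * norm (momentum_error k) + (1 / real K) * r * norm (df (X k))"

lemma norm_v_minus_xs: "k \<in> {1..K} \<Longrightarrow> norm (v k - xs) \<le> sqrt 2 * r"
proof -
  assume k: "k \<in> {1..K}"
  have "(v k - xs) \<bullet> (v k - xs) \<le> v k \<bullet> v k + xs \<bullet> xs"
    unfolding inner_vec_sum sum.distrib[symmetric]
  proof (rule sum_mono)
    fix i
    have "0 \<le> v k $ i * xs $ i" using v_cube[OF k] xs_cube by (simp add: mem_unit_cube)
    then show "(v k - xs) $ i * (v k - xs) $ i \<le> v k $ i * v k $ i + xs $ i * xs $ i"
      by (simp add: algebra_simps)
  qed
  also have "\<dots> = (norm (v k))\<^sup>2 + (norm xs)\<^sup>2" by (simp add: power2_norm_eq_inner)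
  also have "\<dots> \<le> r\<^sup>2 + r\<^sup>2" using v_norm[OF k] xs_norm by (intro add_mono power_mono) auto
  finally have "(norm (v k - xs))\<^sup>2 \<le> (sqrt 2 * r)\<^sup>2" by (simp add: power2_norm_eq_inner power_mult_distrib)
  then show ?thesis by (rule power2_le_imp_le) (use r_nonneg in simp)
qed

lemma gain_ge_momentum_gain:
  assumes k: "k \<in> {1..K}"
  shows "gain k \<ge> momentum_gain k - gain_error k"
proof -
  define Q where "Q = X k"
  define d where "d = Q - X (k - 1)"
  have Q: "Q \<in> unit_cube" using X_in_unit_cube k by (simp add: Q_def)
  have "norm d \<le> (1 / real K) * r" using X_step_norm[of "k - 1"] k by (simp add: d_def Q_def)
  have dev_bound: "\<bar>v k $ i - xs $ i\<bar> \<le> 1" and comp_bound: "\<bar>1 - Q $ i\<bar> \<le> 1" for i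
  proof -
    have "0 \<le> v k $ i" "v k $ i \<le> 1" "0 \<le> xs $ i" "xs $ i \<le> 1" "0 \<le> Q $ i" "Q $ i \<le> 1"
      using v_cube[OF k] xs_cube Q by (auto simp: mem_unit_cube)
    then show "\<bar>v k $ i - xs $ i\<bar> \<le> 1" "\<bar>1 - Q $ i\<bar> \<le> 1" by auto
  qed
  have split: "had (df (X k)) (ones - X (k - 1)) = had (exact_momentum k) (ones - Q) + had (momentum_error k) (ones - Q) + had (df Q) d"
    unfolding vec_eq_iff by (simp add: momentum_error_def d_def Q_def algebra_simps)
  have decomp: "gain k = momentum_gain k + momentum_error k \<bullet> had (ones - Q) (v k - xs) + df Q \<bullet> had d (v k - xs)"
    unfolding gain_def momentum_gain_def split inner_add_left inner_had_shift by (simp add: Q_def)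
  have "had (ones - Q) (v k - xs) = had (v k - xs) (ones - Q)" by (simp add: had_def mult.commute)
  then have "norm (had (ones - Q) (v k - xs)) \<le> sqrt 2 * r"
    using norm_had_le[where a="v k - xs" and b="ones - Q"] comp_bound norm_v_minus_xs[OF k] by simp
  then have "\<bar>momentum_error k \<bullet> had (ones - Q) (v k - xs)\<bar> \<le> norm (momentum_error k) * (sqrt 2 * r)"
    using Cauchy_Schwarz_ineq2[of "momentum_error k" "had (ones - Q) (v k - xs)"]
      mult_left_mono[of _ _ "norm (momentum_error k)"] by fastforce
  moreover have "norm (had d (v k - xs)) \<le> (1 / real K) * r"
    using norm_had_le[where a=d and b="v k - xs"] dev_bound \<open>norm d \<le> (1 / real K) * r\<close> by simp
  then have "\<bar>df Q \<bullet> had d (v k - xs)\<bar> \<le> norm (df Q) * ((1 / real K) * r)"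
    using Cauchy_Schwarz_ineq2[of "df Q" "had d (v k - xs)"]
      mult_left_mono[of _ _ "norm (df Q)"] by fastforce
  ultimately show ?thesis
    using decomp unfolding gain_error_def Q_def by (simp add: abs_le_iff mult_ac)
qed

lemma norm_X_minus_X1: "1 \<le> k \<Longrightarrow> k \<le> K \<Longrightarrow> norm (X k - X 1) \<le> real (k - 1) * ((1 / real K) * r)"
proof (induction k rule: dec_induct)
  case base
  then show ?case by simp
next
  case (step n)
  have "norm (X (Suc n) - X 1) \<le> norm (X (Suc n) - X n) + norm (X n - X 1)"
    using norm_triangle_ineq[of "X (Suc n) - X n" "X n - X 1"] by simp
  also have "\<dots> \<le> (1 / real K) * r + real (n - 1) * ((1 / real K) * r)"
    using X_step_norm[of n] step by (intro add_mono) auto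
  also have "\<dots> = real (Suc n - 1) * ((1 / real K) * r)" using step by (simp add: of_nat_diff field_simps)
  finally show ?case .
qed

lemma norm_df_X_le: "k \<in> {1..K} \<Longrightarrow> norm (df (X k)) \<le> norm (df (X 1)) + L * r"
proof -
  assume k: "k \<in> {1..K}"
  have "real (k - 1) * (1 / real K) \<le> 1" using k by (simp add: field_simps)
  then have "real (k - 1) * (1 / real K) * r \<le> 1 * r" using r_nonneg by (rule mult_right_mono)
  then have "real (k - 1) * ((1 / real K) * r) \<le> r" by (simp add: mult.assoc)
  then have "norm (X k - X 1) \<le> r" using norm_X_minus_X1 k by (meson atLeastAtMost_iff order_trans)
  then have "norm (df (X k) - df (X 1)) \<le> L * r"
    using df_lipschitz[OF X_in_unit_cube X_in_unit_cube, of k 1] k K1 L_nonneg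
    by (meson atLeastAtMost_iff mult_left_mono order_trans)
  then show ?thesis using norm_triangle_sub[of "df (X k)" "df (X 1)"] by simp
qed

lemma norm_momentum_error_Suc:
  assumes "Suc j \<le> K"
  shows "norm (momentum_error (Suc j)) \<le> (1 - mfw_eta (Suc j)) * (norm (momentum_error j) + L * ((1 / real K) * r))"
proof -
  have e: "0 \<le> 1 - mfw_eta (Suc j)" using mfw_eta_le_one[of "Suc j"] by simp
  have "norm (df (X (Suc j)) - df (X j)) \<le> L * ((1 / real K) * r)"
    using df_lipschitz[OF X_in_unit_cube X_in_unit_cube, of "Suc j" j] X_step_norm[OF assms] L_nonneg assms
    by (meson Suc_leD mult_left_mono order_trans)
  moreover have "momentum_error (Suc j) = (1 - mfw_eta (Suc j)) *\<^sub>R (momentum_error j + (df (X (Suc j)) - df (X j)))"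
    by (simp add: momentum_error_def algebra_simps)
  ultimately show ?thesis
    using e norm_triangle_ineq[of "momentum_error j" "df (X (Suc j)) - df (X j)"]
    by (auto intro!: mult_left_mono)
qed

lemma momentum_error_sum_bound:
  "mfw_eta K * (\<Sum>k=1..K. norm (momentum_error k))
     \<le> (1 - mfw_eta 1) * norm (df (X 1)) + real (K - 1) * (L * ((1 / real K) * r))"
proof -
  define c where "c = L * ((1 / real K) * r)"
  have c: "0 \<le> c" using L_nonneg r_nonneg inverse_K_bounds by (simp add: c_def)
  have "momentum_error 1 = (1 - mfw_eta 1) *\<^sub>R df (X 1)"
    by (simp add: momentum_error_def algebra_simps)
  then have error_1: "norm (momentum_error 1) = (1 - mfw_eta 1) * norm (df (X 1))"
    using mfw_eta_le_one[of 1] by simp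
  have "mfw_eta K * (\<Sum>k=1..K. norm (momentum_error k)) \<le> norm (momentum_error 1) + real (K - 1) * c"
  proof (rule damped_recurrence_sum_bound[OF K1 _ less_imp_le[OF mfw_eta_pos] mfw_eta_le_one])
    fix k assume k: "2 \<le> k" "k \<le> K"
    then obtain j where kj: "k = Suc j" by (cases k) auto
    have "norm (momentum_error k) \<le> (1 - mfw_eta k) * (norm (momentum_error j) + c)"
      using norm_momentum_error_Suc[of j] k kj by (simp add: c_def)
    also have "\<dots> \<le> (1 - mfw_eta K) * (norm (momentum_error j) + c)"
      using mfw_eta_antimono[of k K] k c by (intro mult_right_mono) auto
    also have "\<dots> \<le> (1 - mfw_eta K) * norm (momentum_error j) + c"
      using mfw_eta_pos[of K] mfw_eta_le_one[of K] c mult_left_le_one_le[of c "1 - mfw_eta K"]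
      by (simp add: distrib_left)
    finally show "norm (momentum_error k) \<le> (1 - mfw_eta K) * norm (momentum_error (k - 1)) + c"
      using kj by simp
  qed simp
  then show ?thesis using error_1 by (simp add: c_def)
qed

lemma sum_gain_error_le:
  "(\<Sum>k=1..K. (1 / real K) * gain_error k)
     \<le> (1 / real K) * (sqrt 2 * r * (((1 - mfw_eta 1) * norm (df (X 1))
            + real (K - 1) * (L * ((1 / real K) * r))) / mfw_eta K))
       + (1 / real K) * (r * (norm (df (X 1)) + L * r))"
proof -
  define \<rho> where "\<rho> = 1 / real K"
  have \<rho>: "0 < \<rho>" using inverse_K_bounds by (simp add: \<rho>_def)
  have errors: "(\<Sum>k=1..K. norm (momentum_error k))
      \<le> ((1 - mfw_eta 1) * norm (df (X 1)) + real (K - 1) * (L * (\<rho> * r))) / mfw_eta K"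
    using momentum_error_sum_bound mfw_eta_pos[of K] by (simp add: \<rho>_def pos_le_divide_eq mult.commute)
  have gradients: "(\<Sum>k=1..K. norm (df (X k))) \<le> real K * (norm (df (X 1)) + L * r)"
    using sum_mono[of "{1..K}" "\<lambda>k. norm (df (X k))" "\<lambda>_. norm (df (X 1)) + L * r"] norm_df_X_le by simp
  have "(\<Sum>k=1..K. \<rho> * gain_error k)
      = \<rho> * (sqrt 2 * r) * (\<Sum>k=1..K. norm (momentum_error k)) + \<rho> * (\<rho> * r) * (\<Sum>k=1..K. norm (df (X k)))"
    by (simp add: gain_error_def \<rho>_def sum.distrib sum_distrib_left mult_ac distrib_left)
  also have "\<dots> \<le> \<rho> * (sqrt 2 * r) * (((1 - mfw_eta 1) * norm (df (X 1)) + real (K - 1) * (L * (\<rho> * r))) / mfw_eta K)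
                  + \<rho> * (\<rho> * r) * (real K * (norm (df (X 1)) + L * r))"
    using errors gradients \<rho> r_nonneg by (intro add_mono mult_left_mono) auto
  also have "\<dots> = (1 / real K) * (sqrt 2 * r * (((1 - mfw_eta 1) * norm (df (X 1))
            + real (K - 1) * (L * ((1 / real K) * r))) / mfw_eta K))
       + (1 / real K) * (r * (norm (df (X 1)) + L * r))"
    using K1 by (simp add: \<rho>_def field_simps)
  finally show ?thesis unfolding \<rho>_def .
qed

lemma round_gap_le:
  assumes NG: "4 powr (2/3) * (norm (df (X 1)))\<^sup>2 \<le> N" and NL: "6 * (L * r)\<^sup>2 \<le> N"
  shows "f xs / exp 1 - f (X K)
      \<le> (\<Sum>k=1..K. (1 / real K) * (1 - 1 / real K) ^ (K - k) * (had (exact_momentum k) (ones - X k) \<bullet> (xs - v k)))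
        + (L * r\<^sup>2 / (2 * real K) + r / 2 * (3 * N + 1) / real K powr (1/3))"
proof -
  define \<rho> where "\<rho> = 1 / real K"
  define c where "c = 1 - 1 / real K"
  have \<rho>: "0 < \<rho>" "\<rho> \<le> 1" and c: "0 \<le> c" "c \<le> 1"
    using inverse_K_bounds by (auto simp: \<rho>_def c_def)
  have weighted: "c ^ (K - k) * \<rho> * momentum_gain k - \<rho> * gain_error k \<le> c ^ (K - k) * \<rho> * gain k"
    if k: "k \<in> {1..K}" for k
  proof -
    have w: "0 \<le> c ^ (K - k) * \<rho>" "c ^ (K - k) * \<rho> \<le> \<rho>"
      using c \<rho> by (simp_all add: power_le_one mult_left_le_one_le)
    have "gain_error k \<ge> 0" using r_nonneg \<rho> by (simp add: gain_error_def \<rho>_def)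
    then have "c ^ (K - k) * \<rho> * gain_error k \<le> \<rho> * gain_error k" using w by (intro mult_right_mono)
    moreover have "c ^ (K - k) * \<rho> * (momentum_gain k - gain_error k) \<le> c ^ (K - k) * \<rho> * gain k"
      using gain_ge_momentum_gain[OF k] w by (intro mult_left_mono) auto
    ultimately show ?thesis by (simp add: right_diff_distrib)
  qed
  have "f (X K) \<ge> c ^ K * f (X 0) + real K * \<rho> * c ^ (K - 1) * f xs
           + (\<Sum>k=1..K. c ^ (K - k) * \<rho> * gain k) - real K * L * \<rho>\<^sup>2 * r\<^sup>2"
    using value_unrolled_lower[of K] by (simp add: c_def \<rho>_def)
  moreover have "real K * \<rho> = 1" and "real K * L * \<rho>\<^sup>2 * r\<^sup>2 = L * \<rho> * r\<^sup>2"
    using K1 by (simp_all add: \<rho>_def power2_eq_square)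
  moreover have "0 \<le> c ^ K * f (X 0)" using c f_nonneg X_in_unit_cube[of 0] by simp
  moreover have "f xs / exp 1 \<le> c ^ (K - 1) * f xs"
    using mult_right_mono[OF exp_neg_one_le_power[OF K1] f_nonneg[OF xs_cube]]
    by (simp add: c_def exp_minus field_simps)
  moreover have "(\<Sum>k=1..K. c ^ (K - k) * \<rho> * momentum_gain k) - (\<Sum>k=1..K. \<rho> * gain_error k)
      \<le> (\<Sum>k=1..K. c ^ (K - k) * \<rho> * gain k)"
    using sum_mono[of "{1..K}", OF weighted] by (simp add: sum_subtractf)
  moreover have "(\<Sum>k=1..K. c ^ (K - k) * \<rho> * momentum_gain k)
      = - (\<Sum>k=1..K. \<rho> * c ^ (K - k) * (had (exact_momentum k) (ones - X k) \<bullet> (xs - v k)))"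
    unfolding sum_negf[symmetric] by (rule sum.cong) (auto simp: momentum_gain_def inner_diff_right algebra_simps)
  ultimately have "f xs / exp 1 - f (X K)
      \<le> (\<Sum>k=1..K. \<rho> * c ^ (K - k) * (had (exact_momentum k) (ones - X k) \<bullet> (xs - v k)))
        + (\<Sum>k=1..K. \<rho> * gain_error k) + L * \<rho> * r\<^sup>2"
    by simp
  moreover have "0 \<le> norm (df (X 1))" by simp
  note error_terms_le[OF K1 this L_nonneg r_nonneg NG NL]
  ultimately show ?thesis using sum_gain_error_le by (simp add: \<rho>_def c_def)
qed

end

section \<open>Measurability and conditional expectations\<close>

lemma borel_measurable_vec_nth[measurable]:
  fixes G :: "'w \<Rightarrow> real^'n"
  assumes "G \<in> borel_measurable N"
  shows "(\<lambda>\<omega>. G \<omega> $ i) \<in> borel_measurable N"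
proof -
  have "continuous_on UNIV (\<lambda>x::real^'n. x $ i)" by (intro continuous_intros)
  then show ?thesis using borel_measurable_continuous_on[OF _ assms] by blast
qed

lemma continuous_on_had: "continuous_on UNIV (\<lambda>z::(real^'n) \<times> (real^'n). had (fst z) (snd z))"
  unfolding had_def by (intro continuous_on_vec_lambda continuous_intros)

lemma borel_measurable_had[measurable]:
  fixes a b :: "'w \<Rightarrow> real^'n"
  assumes "a \<in> borel_measurable N" "b \<in> borel_measurable N"
  shows "(\<lambda>\<omega>. had (a \<omega>) (b \<omega>)) \<in> borel_measurable N"
  using borel_measurable_continuous_Pair[OF assms continuous_on_had] .

lemma borel_measurable_mfw_x:
  fixes v :: "nat \<Rightarrow> 'w \<Rightarrow> real^'n"
  assumes "\<And>j. j \<in> {1..k} \<Longrightarrow> v j \<in> borel_measurable N"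
  shows "(\<lambda>\<omega>. mfw_x K (\<lambda>j. v j \<omega>) k) \<in> borel_measurable N"
  using assms
proof (induction k)
  case 0
  then show ?case by simp
next
  case (Suc k)
  have a: "(\<lambda>\<omega>. mfw_x K (\<lambda>j. v j \<omega>) k) \<in> borel_measurable N" using Suc by auto
  have b: "v (Suc k) \<in> borel_measurable N" using Suc by auto
  show ?case using a b by (simp add: mfw_x.simps(2))
qed

lemma borel_measurable_continuous_on_unit_cube:
  fixes \<phi> :: "real^'n \<Rightarrow> 'b::{second_countable_topology, real_normed_vector}"
  assumes c: "continuous_on unit_cube \<phi>" and X: "X \<in> borel_measurable N"
    and Xc: "\<And>\<omega>. \<omega> \<in> space N \<Longrightarrow> X \<omega> \<in> unit_cube"
  shows "(\<lambda>\<omega>. \<phi> (X \<omega>)) \<in> borel_measurable N"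
proof -
  have cl: "unit_cube \<in> sets borel" using compact_unit_cube by (intro borel_closed compact_imp_closed)
  have "(\<lambda>y. if y \<in> unit_cube then \<phi> y else 0) \<in> borel_measurable borel"
    by (rule borel_measurable_continuous_on_if[OF cl c]) (simp add: continuous_on_const)
  then have "(\<lambda>\<omega>. (\<lambda>y. if y \<in> unit_cube then \<phi> y else 0) (X \<omega>)) \<in> borel_measurable N"
    using X by (rule measurable_compose[rotated])
  then show ?thesis
    by (rule measurable_cong[THEN iffD1, rotated]) (simp add: Xc)
qed

lemma integrable_mfw_g_component:
  fixes Y :: "nat \<Rightarrow> 'w \<Rightarrow> real^'n" and W :: "'w \<Rightarrow> real^'n"
  assumes "\<And>j i. j \<in> {1..k} \<Longrightarrow> integrable M (\<lambda>\<omega>. Y j \<omega> $ i * W \<omega> $ i)"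
  shows "integrable M (\<lambda>\<omega>. mfw_g eta (\<lambda>j. Y j \<omega>) k $ i * W \<omega> $ i)"
  using assms
proof (induction k)
  case 0
  then show ?case by simp
next
  case (Suc k)
  have a: "integrable M (\<lambda>\<omega>. mfw_g eta (\<lambda>j. Y j \<omega>) k $ i * W \<omega> $ i)" using Suc by auto
  have b: "integrable M (\<lambda>\<omega>. Y (Suc k) \<omega> $ i * W \<omega> $ i)" using Suc by auto
  have eq: "(\<lambda>\<omega>. mfw_g eta (\<lambda>j. Y j \<omega>) (Suc k) $ i * W \<omega> $ i)
      = (\<lambda>\<omega>. (1 - eta (Suc k)) * (mfw_g eta (\<lambda>j. Y j \<omega>) k $ i * W \<omega> $ i) + eta (Suc k) * (Y (Suc k) \<omega> $ i * W \<omega> $ i))"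
    by (simp add: algebra_simps)
  show ?case unfolding eq using a b by simp
qed

lemma integrable_inner_componentwise:
  fixes Y :: "'w \<Rightarrow> real^'n" and W :: "'w \<Rightarrow> real^'n"
  assumes "\<And>i. integrable M (\<lambda>\<omega>. Y \<omega> $ i * W \<omega> $ i)"
  shows "integrable M (\<lambda>\<omega>. Y \<omega> \<bullet> W \<omega>)" "integral\<^sup>L M (\<lambda>\<omega>. Y \<omega> \<bullet> W \<omega>) = (\<Sum>i\<in>UNIV. integral\<^sup>L M (\<lambda>\<omega>. Y \<omega> $ i * W \<omega> $ i))"
  using assms by (simp_all add: inner_vec_sum integral_sum)

lemma integral_mfw_g_inner_cong:
  fixes Y Z :: "nat \<Rightarrow> 'w \<Rightarrow> real^'n" and W :: "'w \<Rightarrow> real^'n"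
  assumes iY: "\<And>j i. j \<in> {1..k} \<Longrightarrow> integrable M (\<lambda>\<omega>. Y j \<omega> $ i * W \<omega> $ i)"
    and iZ: "\<And>j i. j \<in> {1..k} \<Longrightarrow> integrable M (\<lambda>\<omega>. Z j \<omega> $ i * W \<omega> $ i)"
    and eq: "\<And>j. j \<in> {1..k} \<Longrightarrow> integral\<^sup>L M (\<lambda>\<omega>. Y j \<omega> \<bullet> W \<omega>) = integral\<^sup>L M (\<lambda>\<omega>. Z j \<omega> \<bullet> W \<omega>)"
  shows "integral\<^sup>L M (\<lambda>\<omega>. mfw_g eta (\<lambda>j. Y j \<omega>) k \<bullet> W \<omega>) = integral\<^sup>L M (\<lambda>\<omega>. mfw_g eta (\<lambda>j. Z j \<omega>) k \<bullet> W \<omega>)"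
  using iY iZ eq
proof (induction k)
  case 0
  then show ?case by simp
next
  case (Suc k)
  have IH: "integral\<^sup>L M (\<lambda>\<omega>. mfw_g eta (\<lambda>j. Y j \<omega>) k \<bullet> W \<omega>) = integral\<^sup>L M (\<lambda>\<omega>. mfw_g eta (\<lambda>j. Z j \<omega>) k \<bullet> W \<omega>)"
    using Suc.IH Suc.prems by auto
  have iY1: "integrable M (\<lambda>\<omega>. mfw_g eta (\<lambda>j. Y j \<omega>) k \<bullet> W \<omega>)"
    by (rule integrable_inner_componentwise(1), rule integrable_mfw_g_component) (use Suc.prems in auto)
  have iZ1: "integrable M (\<lambda>\<omega>. mfw_g eta (\<lambda>j. Z j \<omega>) k \<bullet> W \<omega>)"
    by (rule integrable_inner_componentwise(1), rule integrable_mfw_g_component) (use Suc.prems in auto)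
  have iY2: "integrable M (\<lambda>\<omega>. Y (Suc k) \<omega> \<bullet> W \<omega>)"
    by (rule integrable_inner_componentwise(1)) (use Suc.prems in auto)
  have iZ2: "integrable M (\<lambda>\<omega>. Z (Suc k) \<omega> \<bullet> W \<omega>)"
    by (rule integrable_inner_componentwise(1)) (use Suc.prems in auto)
  have e2: "integral\<^sup>L M (\<lambda>\<omega>. Y (Suc k) \<omega> \<bullet> W \<omega>) = integral\<^sup>L M (\<lambda>\<omega>. Z (Suc k) \<omega> \<bullet> W \<omega>)"
    using Suc.prems by auto
  have dY: "(\<lambda>\<omega>. mfw_g eta (\<lambda>j. Y j \<omega>) (Suc k) \<bullet> W \<omega>) =
      (\<lambda>\<omega>. (1 - eta (Suc k)) * (mfw_g eta (\<lambda>j. Y j \<omega>) k \<bullet> W \<omega>) + eta (Suc k) * (Y (Suc k) \<omega> \<bullet> W \<omega>))"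
    by (simp add: inner_add_left)
  have dZ: "(\<lambda>\<omega>. mfw_g eta (\<lambda>j. Z j \<omega>) (Suc k) \<bullet> W \<omega>) =
      (\<lambda>\<omega>. (1 - eta (Suc k)) * (mfw_g eta (\<lambda>j. Z j \<omega>) k \<bullet> W \<omega>) + eta (Suc k) * (Z (Suc k) \<omega> \<bullet> W \<omega>))"
    by (simp add: inner_add_left)
  show ?case unfolding dY dZ using iY1 iZ1 iY2 iZ2 IH e2 by simp
qed

lemma (in prob_space) integral_mult_cond_exp_eq:
  fixes g d w :: "'a \<Rightarrow> real"
  assumes sub: "subalgebra M Fj" and g: "integrable M g"
    and w: "w \<in> borel_measurable Fj" and w_bound: "\<And>\<omega>. \<omega> \<in> space M \<Longrightarrow> \<bar>w \<omega>\<bar> \<le> 1"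
    and d: "d \<in> borel_measurable M" and d_bound: "\<And>\<omega>. \<omega> \<in> space M \<Longrightarrow> \<bar>d \<omega>\<bar> \<le> B"
    and unbiased: "AE \<omega> in M. real_cond_exp M Fj g \<omega> = d \<omega>"
  shows "integrable M (\<lambda>\<omega>. g \<omega> * w \<omega>)" and "integrable M (\<lambda>\<omega>. d \<omega> * w \<omega>)"
    and "(\<integral>\<omega>. g \<omega> * w \<omega> \<partial>M) = (\<integral>\<omega>. d \<omega> * w \<omega> \<partial>M)"
proof -
  have "finite_measure_subalgebra M Fj"
    by (simp add: finite_measure_subalgebra_def finite_measure_subalgebra_axioms_def sub)
  then interpret sigma_finite_subalgebra M Fj by (rule finite_measure_subalgebra_is_sigma_finite)
  have gM: "g \<in> borel_measurable M" using g by (rule borel_measurable_integrable)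
  have wM: "w \<in> borel_measurable M" by (rule measurable_from_subalg[OF sub w])
  show gw: "integrable M (\<lambda>\<omega>. g \<omega> * w \<omega>)"
  proof (rule Bochner_Integration.integrable_bound[OF g])
    show "(\<lambda>\<omega>. g \<omega> * w \<omega>) \<in> borel_measurable M" using gM wM by measurable
    show "AE \<omega> in M. norm (g \<omega> * w \<omega>) \<le> norm (g \<omega>)"
      using w_bound by (auto simp: abs_mult intro!: mult_left_le)
  qed
  show "integrable M (\<lambda>\<omega>. d \<omega> * w \<omega>)"
  proof (rule integrable_const_bound[where B=B])
    show "AE \<omega> in M. norm (d \<omega> * w \<omega>) \<le> B"
    proof (rule AE_I2)
      fix \<omega> assume \<omega>: "\<omega> \<in> space M"
      have "\<bar>d \<omega>\<bar> * \<bar>w \<omega>\<bar> \<le> B * 1"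
        using d_bound[OF \<omega>] w_bound[OF \<omega>] by (intro mult_mono) auto
      then show "norm (d \<omega> * w \<omega>) \<le> B" by (simp add: abs_mult)
    qed
    show "(\<lambda>\<omega>. d \<omega> * w \<omega>) \<in> borel_measurable M" using d wM by measurable
  qed
  have "(\<integral>\<omega>. g \<omega> * w \<omega> \<partial>M) = (\<integral>\<omega>. w \<omega> * real_cond_exp M Fj g \<omega> \<partial>M)"
    using real_cond_exp_intg(2)[OF _ w gM] gw by (simp add: mult.commute)
  also have "\<dots> = (\<integral>\<omega>. d \<omega> * w \<omega> \<partial>M)"
    using wM d unbiased by (intro integral_cong_AE) (measurable, auto)
  finally show "(\<integral>\<omega>. g \<omega> * w \<omega> \<partial>M) = (\<integral>\<omega>. d \<omega> * w \<omega> \<partial>M)" .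
qed

lemma (in prob_space) integral_inner_cond_exp_eq:
  fixes G D W :: "'a \<Rightarrow> real^'n"
  assumes sub: "subalgebra M Fj" and G: "\<And>i. integrable M (\<lambda>\<omega>. G \<omega> $ i)"
    and W: "W \<in> borel_measurable Fj" and W_bound: "\<And>\<omega> i. \<omega> \<in> space M \<Longrightarrow> \<bar>W \<omega> $ i\<bar> \<le> 1"
    and D: "D \<in> borel_measurable M" and D_bound: "\<And>\<omega> i. \<omega> \<in> space M \<Longrightarrow> \<bar>D \<omega> $ i\<bar> \<le> B"
    and unbiased: "\<And>i. AE \<omega> in M. real_cond_exp M Fj (\<lambda>\<omega>. G \<omega> $ i) \<omega> = D \<omega> $ i"
  shows "\<And>i. integrable M (\<lambda>\<omega>. G \<omega> $ i * W \<omega> $ i)" and "\<And>i. integrable M (\<lambda>\<omega>. D \<omega> $ i * W \<omega> $ i)"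
    and "(\<integral>\<omega>. G \<omega> \<bullet> W \<omega> \<partial>M) = (\<integral>\<omega>. D \<omega> \<bullet> W \<omega> \<partial>M)"
proof -
  note componentwise = integral_mult_cond_exp_eq[OF sub G borel_measurable_vec_nth[OF W] W_bound
      borel_measurable_vec_nth[OF D] D_bound unbiased]
  show GW: "\<And>i. integrable M (\<lambda>\<omega>. G \<omega> $ i * W \<omega> $ i)" by (rule componentwise(1))
  show DW: "\<And>i. integrable M (\<lambda>\<omega>. D \<omega> $ i * W \<omega> $ i)" by (rule componentwise(2))
  show "(\<integral>\<omega>. G \<omega> \<bullet> W \<omega> \<partial>M) = (\<integral>\<omega>. D \<omega> \<bullet> W \<omega> \<partial>M)"
    using componentwise(3) by (simp add: integrable_inner_componentwise(2)[OF GW] integrable_inner_componentwise(2)[OF DW])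
qed

section \<open>Meta-MFW in expectation\<close>

locale meta_mfw = prob_space M
  for M :: "'w measure" +
  fixes C :: "(real^'n) set"
    and f :: "nat \<Rightarrow> real^'n \<Rightarrow> real" and df :: "nat \<Rightarrow> real^'n \<Rightarrow> real^'n"
    and T K :: nat and L :: real and F :: "nat \<Rightarrow> 'w measure"
    and v G :: "nat \<Rightarrow> nat \<Rightarrow> 'w \<Rightarrow> real^'n" and xstar :: "real^'n"
  assumes C_sub: "C \<subseteq> unit_cube" and xstar_in: "xstar \<in> C"
    and T_pos: "T \<ge> 1" and K_pos: "K \<ge> 1"
    and f_nonneg: "\<And>t y. t \<in> {1..T} \<Longrightarrow> y \<in> unit_cube \<Longrightarrow> f t y \<ge> 0"
    and f_DR: "\<And>t. t \<in> {1..T} \<Longrightarrow> DR_submodular (f t) (df t)"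
    and f_smooth: "\<And>t. t \<in> {1..T} \<Longrightarrow> smooth_on_cube L (df t)"
    and F_sub: "\<And>j. subalgebra M (F j)"
    and F_mono: "\<And>i j. i \<le> j \<Longrightarrow> sets (F i) \<subseteq> sets (F j)"
    and v_in: "\<And>t k \<omega>. t \<in> {1..T} \<Longrightarrow> k \<in> {1..K} \<Longrightarrow> \<omega> \<in> space M \<Longrightarrow> v t k \<omega> \<in> C"
    and v_meas: "\<And>t k. t \<in> {1..T} \<Longrightarrow> k \<in> {1..K} \<Longrightarrow> v t k \<in> borel_measurable (F (qidx K t 1))"
    and G_meas: "\<And>t k. t \<in> {1..T} \<Longrightarrow> k \<in> {1..K} \<Longrightarrow> G t k \<in> borel_measurable (F (qidx K t k + 1))"
    and G_int: "\<And>t k i. t \<in> {1..T} \<Longrightarrow> k \<in> {1..K} \<Longrightarrow> integrable M (\<lambda>\<omega>. G t k \<omega> $ i)"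
    and G_unbiased: "\<And>t k i. t \<in> {1..T} \<Longrightarrow> k \<in> {1..K} \<Longrightarrow>
          AE \<omega> in M. real_cond_exp M (F (qidx K t k)) (\<lambda>\<omega>. G t k \<omega> $ i) \<omega> = df t (mfw_x K (\<lambda>j. v t j \<omega>) k) $ i"
begin

abbreviation iterate :: "nat \<Rightarrow> nat \<Rightarrow> 'w \<Rightarrow> real^'n" where
  "iterate t k \<omega> \<equiv> mfw_x K (\<lambda>j. v t j \<omega>) k"

abbreviation momentum :: "nat \<Rightarrow> nat \<Rightarrow> 'w \<Rightarrow> real^'n" where
  "momentum t k \<omega> \<equiv> mfw_g mfw_eta (\<lambda>j. G t j \<omega>) k"

abbreviation exact_momentum :: "nat \<Rightarrow> nat \<Rightarrow> 'w \<Rightarrow> real^'n" where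
  "exact_momentum t k \<omega> \<equiv> mfw_g mfw_eta (\<lambda>j. df t (iterate t j \<omega>)) k"

definition gain_direction :: "nat \<Rightarrow> nat \<Rightarrow> 'w \<Rightarrow> real^'n" where
  "gain_direction t k \<omega> = had (ones - iterate t k \<omega>) (xstar - v t k \<omega>)"

definition fw_weight :: "nat \<Rightarrow> real" where
  "fw_weight k = (1 / real K) * (1 - 1 / real K) ^ (K - k)"

definition round_error :: "real \<Rightarrow> real" where
  "round_error N = L * (radius C)\<^sup>2 / (2 * real K) + radius C / 2 * (3 * N + 1) / real K powr (1/3)"

lemma space_F: "space (F j) = space M"
  using F_sub[of j] by (simp add: subalgebra_def)

lemma L_nonneg: "L \<ge> 0"
  using smooth_on_cube_nonneg[OF f_smooth[of 1]] T_pos by simp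

lemma v_in_unit_cube: "t \<in> {1..T} \<Longrightarrow> k \<in> {1..K} \<Longrightarrow> \<omega> \<in> space M \<Longrightarrow> v t k \<omega> \<in> unit_cube"
  using v_in C_sub by blast

lemma xstar_in_unit_cube: "xstar \<in> unit_cube"
  using xstar_in C_sub by blast

lemma iterate_in_unit_cube:
  assumes "t \<in> {1..T}" "k \<le> K" "\<omega> \<in> space M"
  shows "iterate t k \<omega> \<in> unit_cube"
  using mfw_x_in_unit_cube[where v="\<lambda>j. v t j \<omega>", OF K_pos] v_in_unit_cube assms by blast

lemma iterate_measurable:
  assumes "t \<in> {1..T}" "k \<le> K"
  shows "(\<lambda>\<omega>. iterate t k \<omega>) \<in> borel_measurable (F (qidx K t 1))"
  using borel_measurable_mfw_x[where v="v t" and k=k] v_meas assms by auto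

lemma grad_at_iterate_measurable:
  assumes t: "t \<in> {1..T}" and k: "k \<le> K"
  shows "(\<lambda>\<omega>. df t (iterate t k \<omega>)) \<in> borel_measurable (F (qidx K t 1))"
proof (rule borel_measurable_continuous_on_unit_cube[where \<phi>="df t" and X="\<lambda>\<omega>. iterate t k \<omega>"])
  show "continuous_on unit_cube (df t)" by (rule smooth_on_cube_continuous_on[OF f_smooth[OF t]])
  show "(\<lambda>\<omega>. iterate t k \<omega>) \<in> borel_measurable (F (qidx K t 1))" by (rule iterate_measurable[OF t k])
  show "\<And>\<omega>. \<omega> \<in> space (F (qidx K t 1)) \<Longrightarrow> iterate t k \<omega> \<in> unit_cube"
    using iterate_in_unit_cube[OF t k] by (simp add: space_F)
qed

lemma df_bounded: "\<exists>B. \<forall>t\<in>{1..T}. \<forall>y\<in>unit_cube. norm (df t y) \<le> B"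
proof (intro exI ballI)
  fix t y assume t: "t \<in> {1..T}" and y: "(y :: real^'n) \<in> unit_cube"
  have "norm (df t 0) \<le> (\<Sum>s\<in>{1..T}. norm (df s 0))" using t by (intro member_le_sum) auto
  then show "norm (df t y) \<le> (\<Sum>s\<in>{1..T}. norm (df s 0)) + L * real CARD('n)"
    using smooth_on_cube_norm_le[OF f_smooth[OF t] y] by simp
qed

lemma grad_at_first_iterate_le_SUP:
  assumes "t \<in> {1..T}" "\<omega> \<in> space M"
  shows "(norm (df t (iterate t 1 \<omega>)))\<^sup>2
      \<le> (SUP p\<in>{1..T} \<times> space M. (norm (df (fst p) (iterate (fst p) 1 (snd p))))\<^sup>2)"
proof -
  obtain B where B: "\<And>t y. t \<in> {1..T} \<Longrightarrow> y \<in> unit_cube \<Longrightarrow> norm (df t y) \<le> B"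
    using df_bounded by blast
  have "bdd_above ((\<lambda>p. (norm (df (fst p) (iterate (fst p) 1 (snd p))))\<^sup>2) ` ({1..T} \<times> space M))"
  proof (rule bdd_aboveI2)
    fix p assume p: "p \<in> {1..T} \<times> space M"
    then have "iterate (fst p) 1 (snd p) \<in> unit_cube" using K_pos by (intro iterate_in_unit_cube) auto
    then have "norm (df (fst p) (iterate (fst p) 1 (snd p))) \<le> B" using p B by auto
    then show "(norm (df (fst p) (iterate (fst p) 1 (snd p))))\<^sup>2 \<le> B\<^sup>2" by (intro power_mono) auto
  qed
  from cSUP_upper[OF _ this, of "(t, \<omega>)"] show ?thesis using assms by simp
qed

lemma gain_direction_measurable:
  "t \<in> {1..T} \<Longrightarrow> k \<in> {1..K} \<Longrightarrow> gain_direction t k \<in> borel_measurable (F (qidx K t 1))"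
  unfolding gain_direction_def using iterate_measurable[of t k] v_meas[of t k] by measurable

lemma gain_direction_bounded:
  assumes "t \<in> {1..T}" "k \<in> {1..K}" "\<omega> \<in> space M"
  shows "\<bar>gain_direction t k \<omega> $ i\<bar> \<le> 1"
proof -
  have "0 \<le> iterate t k \<omega> $ i" "iterate t k \<omega> $ i \<le> 1" "0 \<le> v t k \<omega> $ i" "v t k \<omega> $ i \<le> 1"
      "0 \<le> xstar $ i" "xstar $ i \<le> 1"
    using iterate_in_unit_cube[of t k \<omega>] v_in_unit_cube[OF assms] xstar_in_unit_cube assms
    by (auto simp: mem_unit_cube)
  then have "\<bar>1 - iterate t k \<omega> $ i\<bar> * \<bar>xstar $ i - v t k \<omega> $ i\<bar> \<le> 1 * 1"
    by (intro mult_mono) auto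
  then show ?thesis by (simp add: gain_direction_def abs_mult)
qed

lemma round_gap_le_exact_momentum:
  assumes t: "t \<in> {1..T}" and \<omega>: "\<omega> \<in> space M"
    and NG: "4 powr (2/3) * (norm (df t (iterate t 1 \<omega>)))\<^sup>2 \<le> N" and NL: "6 * (L * radius C)\<^sup>2 \<le> N"
  shows "f t xstar / exp 1 - f t (iterate t K \<omega>)
      \<le> (\<Sum>k=1..K. fw_weight k * (exact_momentum t k \<omega> \<bullet> gain_direction t k \<omega>)) + round_error N"
proof -
  interpret round: mfw_round "f t" "df t" K "\<lambda>j. v t j \<omega>" xstar L "radius C"
  proof
    show "1 \<le> K" by (rule K_pos)
    show "DR_submodular (f t) (df t)" by (rule f_DR[OF t])
    show "smooth_on_cube L (df t)" by (rule f_smooth[OF t])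
    show "\<And>y. y \<in> unit_cube \<Longrightarrow> 0 \<le> f t y" by (rule f_nonneg[OF t])
    show "\<And>k. k \<in> {1..K} \<Longrightarrow> v t k \<omega> \<in> unit_cube" by (rule v_in_unit_cube[OF t _ \<omega>])
    show "\<And>k. k \<in> {1..K} \<Longrightarrow> norm (v t k \<omega>) \<le> radius C"
      by (rule norm_le_radius[OF C_sub v_in[OF t _ \<omega>]])
    show "xstar \<in> unit_cube" by (rule xstar_in_unit_cube)
    show "norm xstar \<le> radius C" by (rule norm_le_radius[OF C_sub xstar_in])
  qed
  show ?thesis
    using round.round_gap_le[OF NG NL]
    by (simp add: fw_weight_def gain_direction_def round_error_def inner_had_shift)
qed

text \<open>The gain direction is determined before the round's first gradient query, so each
  stochastic gradient of the round may be replaced by the true one inside its expectation.\<close>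

lemma expectation_gradient_gain_eq:
  assumes t: "t \<in> {1..T}" and k: "k \<in> {1..K}" and j: "j \<in> {1..k}"
  shows "\<And>i. integrable M (\<lambda>\<omega>. G t j \<omega> $ i * gain_direction t k \<omega> $ i)"
    and "\<And>i. integrable M (\<lambda>\<omega>. df t (iterate t j \<omega>) $ i * gain_direction t k \<omega> $ i)"
    and "(\<integral>\<omega>. G t j \<omega> \<bullet> gain_direction t k \<omega> \<partial>M) = (\<integral>\<omega>. df t (iterate t j \<omega>) \<bullet> gain_direction t k \<omega> \<partial>M)"
proof -
  have jK: "j \<in> {1..K}" using j k by auto
  obtain B where B: "\<And>s y. s \<in> {1..T} \<Longrightarrow> y \<in> unit_cube \<Longrightarrow> norm (df s y) \<le> B"
    using df_bounded by blast
  have "qidx K t 1 \<le> qidx K t j" using j by (auto simp: qidx_def)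
  then have "sets (F (qidx K t 1)) \<subseteq> sets (F (qidx K t j))" by (rule F_mono)
  then have "subalgebra (F (qidx K t j)) (F (qidx K t 1))"
    by (simp add: subalgebra_def space_F)
  then have W: "gain_direction t k \<in> borel_measurable (F (qidx K t j))"
    by (rule measurable_from_subalg[OF _ gain_direction_measurable[OF t k]])
  have "\<bar>df t (iterate t j \<omega>) $ i\<bar> \<le> B" if "\<omega> \<in> space M" for \<omega> i
    using component_le_norm_cart[of "df t (iterate t j \<omega>)" i] B[OF t iterate_in_unit_cube] jK t that
    by (meson atLeastAtMost_iff order_trans)
  note unbiased = integral_inner_cond_exp_eq[OF F_sub G_int[OF t jK] W gain_direction_bounded[OF t k]
      measurable_from_subalg[OF F_sub grad_at_iterate_measurable] this G_unbiased[OF t jK]]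
  show "\<And>i. integrable M (\<lambda>\<omega>. G t j \<omega> $ i * gain_direction t k \<omega> $ i)"
    and "\<And>i. integrable M (\<lambda>\<omega>. df t (iterate t j \<omega>) $ i * gain_direction t k \<omega> $ i)"
    and "(\<integral>\<omega>. G t j \<omega> \<bullet> gain_direction t k \<omega> \<partial>M) = (\<integral>\<omega>. df t (iterate t j \<omega>) \<bullet> gain_direction t k \<omega> \<partial>M)"
    using unbiased t jK by auto
qed

lemma expectation_momentum_gain_eq:
  assumes t: "t \<in> {1..T}" and k: "k \<in> {1..K}"
  shows "integrable M (\<lambda>\<omega>. exact_momentum t k \<omega> \<bullet> gain_direction t k \<omega>)"
    and "integrable M (\<lambda>\<omega>. momentum t k \<omega> \<bullet> gain_direction t k \<omega>)"
    and "(\<integral>\<omega>. exact_momentum t k \<omega> \<bullet> gain_direction t k \<omega> \<partial>M)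
       = (\<integral>\<omega>. momentum t k \<omega> \<bullet> gain_direction t k \<omega> \<partial>M)"
  using expectation_gradient_gain_eq[OF t k]
  by (auto intro!: integrable_inner_componentwise(1) integrable_mfw_g_component
      integral_mfw_g_inner_cong[symmetric])

lemma integrable_f_iterate:
  assumes t: "t \<in> {1..T}"
  shows "integrable M (\<lambda>\<omega>. f t (iterate t K \<omega>))"
proof -
  have cont: "continuous_on unit_cube (f t)" by (rule DR_submodular_continuous_on[OF f_DR[OF t]])
  then have "compact (f t ` unit_cube)" by (rule compact_continuous_image[OF _ compact_unit_cube])
  then obtain B where B: "\<And>y. y \<in> unit_cube \<Longrightarrow> norm (f t y) \<le> B"
    using compact_imp_bounded bounded_iff by (metis image_eqI)
  show ?thesis
  proof (rule integrable_const_bound[where B=B])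
    show "AE \<omega> in M. norm (f t (iterate t K \<omega>)) \<le> B" using B iterate_in_unit_cube t by auto
    have "(\<lambda>\<omega>. iterate t K \<omega>) \<in> borel_measurable M"
      by (rule measurable_from_subalg[OF F_sub iterate_measurable[OF t order_refl]])
    then show "(\<lambda>\<omega>. f t (iterate t K \<omega>)) \<in> borel_measurable M"
      using iterate_in_unit_cube[OF t order_refl]
      by (intro borel_measurable_continuous_on_unit_cube[OF cont]) auto
  qed
qed

lemma expected_round_gap_le:
  assumes t: "t \<in> {1..T}"
    and NG: "\<And>\<omega>. \<omega> \<in> space M \<Longrightarrow> 4 powr (2/3) * (norm (df t (iterate t 1 \<omega>)))\<^sup>2 \<le> N"
    and NL: "6 * (L * radius C)\<^sup>2 \<le> N"
  shows "f t xstar / exp 1 - (\<integral>\<omega>. f t (iterate t K \<omega>) \<partial>M)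
      \<le> (\<Sum>k=1..K. fw_weight k * (\<integral>\<omega>. momentum t k \<omega> \<bullet> gain_direction t k \<omega> \<partial>M)) + round_error N"
proof -
  let ?H = "\<lambda>k \<omega>. exact_momentum t k \<omega> \<bullet> gain_direction t k \<omega>"
  have int_H: "integrable M (?H k)" if "k \<in> {1..K}" for k
    by (rule expectation_momentum_gain_eq(1)[OF t that])
  have int_sum: "integrable M (\<lambda>\<omega>. \<Sum>k=1..K. fw_weight k * ?H k \<omega>)"
    using int_H by (intro Bochner_Integration.integrable_sum integrable_mult_right) auto
  have "f t xstar / exp 1 - (\<integral>\<omega>. f t (iterate t K \<omega>) \<partial>M)
      = (\<integral>\<omega>. f t xstar / exp 1 - f t (iterate t K \<omega>) \<partial>M)"
    using integrable_f_iterate[OF t] by (simp add: prob_space)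
  also have "\<dots> \<le> (\<integral>\<omega>. (\<Sum>k=1..K. fw_weight k * ?H k \<omega>) + round_error N \<partial>M)"
    using round_gap_le_exact_momentum[OF t _ NG NL] integrable_f_iterate[OF t] int_sum
    by (intro integral_mono Bochner_Integration.integrable_add) auto
  also have "\<dots> = (\<Sum>k=1..K. fw_weight k * (\<integral>\<omega>. ?H k \<omega> \<partial>M)) + round_error N"
    using int_sum int_H by (simp add: prob_space Bochner_Integration.integral_sum)
  also have "\<dots> = (\<Sum>k=1..K. fw_weight k * (\<integral>\<omega>. momentum t k \<omega> \<bullet> gain_direction t k \<omega> \<partial>M)) + round_error N"
    using expectation_momentum_gain_eq(3)[OF t] by simp
  finally show ?thesis .
qed

lemma sum_fw_weight_le_one: "(\<Sum>k=1..K. fw_weight k) \<le> 1"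
proof -
  have "fw_weight k \<le> 1 / real K" for k
  proof -
    have "(1 - 1 / real K) ^ (K - k) \<le> 1" using K_pos by (intro power_le_one) auto
    then show ?thesis unfolding fw_weight_def using K_pos by (simp add: divide_right_mono)
  qed
  then have "(\<Sum>k=1..K. fw_weight k) \<le> (\<Sum>k=1..K. 1 / real K)" by (intro sum_mono)
  also have "\<dots> = 1" using K_pos by simp
  finally show ?thesis .
qed

theorem expected_gap_le:
  assumes regret: "\<And>k \<omega>. k \<in> {1..K} \<Longrightarrow> \<omega> \<in> space M \<Longrightarrow>
        (\<Sum>t=1..T. had (momentum t k \<omega>) (ones - iterate t k \<omega>) \<bullet> (xstar - v t k \<omega>)) \<le> B"
    and B: "B \<ge> 0"
    and NG: "\<And>t \<omega>. t \<in> {1..T} \<Longrightarrow> \<omega> \<in> space M \<Longrightarrow> 4 powr (2/3) * (norm (df t (iterate t 1 \<omega>)))\<^sup>2 \<le> N"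
    and NL: "6 * (L * radius C)\<^sup>2 \<le> N"
  shows "(1 / exp 1) * (\<Sum>t=1..T. f t xstar) - (\<Sum>t=1..T. \<integral>\<omega>. f t (iterate t K \<omega>) \<partial>M)
      \<le> B + real T * round_error N"
proof -
  let ?E = "\<lambda>t k. \<integral>\<omega>. momentum t k \<omega> \<bullet> gain_direction t k \<omega> \<partial>M"
  have regret_expected: "(\<Sum>t=1..T. ?E t k) \<le> B" if k: "k \<in> {1..K}" for k
  proof -
    have "(\<Sum>t=1..T. ?E t k) = (\<integral>\<omega>. (\<Sum>t=1..T. momentum t k \<omega> \<bullet> gain_direction t k \<omega>) \<partial>M)"
      using expectation_momentum_gain_eq(2)[OF _ k] by (simp add: integral_sum)
    also have "\<dots> \<le> (\<integral>\<omega>. B \<partial>M)"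
      using regret[OF k] expectation_momentum_gain_eq(2)[OF _ k]
      by (intro integral_mono) (auto simp: gain_direction_def inner_had_shift)
    finally show ?thesis by (simp add: prob_space)
  qed
  have "(1 / exp 1) * (\<Sum>t=1..T. f t xstar) - (\<Sum>t=1..T. \<integral>\<omega>. f t (iterate t K \<omega>) \<partial>M)
      = (\<Sum>t=1..T. f t xstar / exp 1 - (\<integral>\<omega>. f t (iterate t K \<omega>) \<partial>M))"
    by (simp add: sum_subtractf sum_distrib_left)
  also have "\<dots> \<le> (\<Sum>t=1..T. (\<Sum>k=1..K. fw_weight k * ?E t k) + round_error N)"
    using expected_round_gap_le[OF _ NG NL] by (intro sum_mono) auto
  also have "\<dots> = (\<Sum>k=1..K. fw_weight k * (\<Sum>t=1..T. ?E t k)) + real T * round_error N"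
    by (simp add: sum.distrib sum_distrib_left) (rule sum.swap)
  also have "\<dots> \<le> (\<Sum>k=1..K. fw_weight k * B) + real T * round_error N"
    using regret_expected K_pos by (intro add_mono sum_mono mult_left_mono) (auto simp: fw_weight_def)
  also have "\<dots> \<le> B + real T * round_error N"
    using sum_fw_weight_le_one B mult_right_mono[of _ 1 B] by (simp add: sum_distrib_right[symmetric])
  finally show ?thesis .
qed

end


theorem theorem1:
  fixes C :: "(real^'n) set"
    and f :: "nat \<Rightarrow> real^'n \<Rightarrow> real" and df :: "nat \<Rightarrow> real^'n \<Rightarrow> real^'n"
    and T K :: nat and L0 \<sigma> M0 :: real
    and M :: "'w measure" and F :: "nat \<Rightarrow> 'w measure"
    and v :: "nat \<Rightarrow> nat \<Rightarrow> 'w \<Rightarrow> real^'n"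
    and G :: "nat \<Rightarrow> nat \<Rightarrow> 'w \<Rightarrow> real^'n"
    and xstar :: "real^'n"
  defines "x \<equiv> (\<lambda>t k \<omega>. mfw_x K (\<lambda>j. v t j \<omega>) k)"
      and "g \<equiv> (\<lambda>t k \<omega>. mfw_g mfw_eta (\<lambda>j. G t j \<omega>) k)"
      and "N0 \<equiv> max (4 powr (2/3) * (SUP p\<in>{1..T} \<times> space M. (norm (df (fst p) (mfw_x K (\<lambda>j. v (fst p) j (snd p)) 1)))\<^sup>2))
                     (4 * \<sigma>\<^sup>2 + 6 * (L0 * radius C)\<^sup>2)"
  assumes C_sub: "C \<subseteq> unit_cube" and C_convex: "convex C" and C_down: "down_closed C"
      and C_zero: "0 \<in> C"
      and T_pos: "T \<ge> 1" and K_pos: "K \<ge> 1"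
      and f_nonneg: "\<And>t x. t \<in> {1..T} \<Longrightarrow> x \<in> unit_cube \<Longrightarrow> f t x \<ge> 0"
      and f_DR: "\<And>t. t \<in> {1..T} \<Longrightarrow> DR_submodular (f t) (df t)"
      and f_smooth: "\<And>t. t \<in> {1..T} \<Longrightarrow> smooth_on_cube L0 (df t)"
      and M_prob: "prob_space M"
      and F_sub: "\<And>j. subalgebra M (F j)"
      and F_mono: "\<And>i j. i \<le> j \<Longrightarrow> sets (F i) \<subseteq> sets (F j)"
      and v_in: "\<And>t k \<omega>. t \<in> {1..T} \<Longrightarrow> k \<in> {1..K} \<Longrightarrow> \<omega> \<in> space M \<Longrightarrow> v t k \<omega> \<in> C"
      and v_meas: "\<And>t k. t \<in> {1..T} \<Longrightarrow> k \<in> {1..K} \<Longrightarrow> v t k \<in> borel_measurable (F (qidx K t 1))"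
      and G_meas: "\<And>t k. t \<in> {1..T} \<Longrightarrow> k \<in> {1..K} \<Longrightarrow> G t k \<in> borel_measurable (F (qidx K t k + 1))"
      and G_int: "\<And>t k i. t \<in> {1..T} \<Longrightarrow> k \<in> {1..K} \<Longrightarrow> integrable M (\<lambda>\<omega>. G t k \<omega> $ i)"
      and G_unbiased: "\<And>t k i. t \<in> {1..T} \<Longrightarrow> k \<in> {1..K} \<Longrightarrow>
            AE \<omega> in M. real_cond_exp M (F (qidx K t k)) (\<lambda>\<omega>. G t k \<omega> $ i) \<omega> = df t (x t k \<omega>) $ i"
      and G_var_int: "\<And>t k. t \<in> {1..T} \<Longrightarrow> k \<in> {1..K} \<Longrightarrow>
            integrable M (\<lambda>\<omega>. (norm (G t k \<omega> - df t (x t k \<omega>)))\<^sup>2)"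
      and G_var: "\<And>t k. t \<in> {1..T} \<Longrightarrow> k \<in> {1..K} \<Longrightarrow>
            AE \<omega> in M. real_cond_exp M (F (qidx K t k)) (\<lambda>\<omega>. (norm (G t k \<omega> - df t (x t k \<omega>)))\<^sup>2) \<omega> \<le> \<sigma>\<^sup>2"
      and regret: "\<And>k \<tau> u \<omega>. k \<in> {1..K} \<Longrightarrow> \<tau> \<in> {1..T} \<Longrightarrow> u \<in> C \<Longrightarrow> \<omega> \<in> space M \<Longrightarrow>
            (\<Sum>s=1..\<tau>. had (g s k \<omega>) (ones - x s k \<omega>) \<bullet> u)
          - (\<Sum>s=1..\<tau>. had (g s k \<omega>) (ones - x s k \<omega>) \<bullet> v s k \<omega>) \<le> M0 * sqrt (real \<tau>)"
      and xstar_in: "xstar \<in> C"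
      and xstar_max: "\<And>y. y \<in> C \<Longrightarrow> (\<Sum>t=1..T. f t y) \<le> (\<Sum>t=1..T. f t xstar)"
  shows "(1 / exp 1) * (\<Sum>t=1..T. f t xstar) - (\<Sum>t=1..T. integral\<^sup>L M (\<lambda>\<omega>. f t (x t K \<omega>)))
         \<le> M0 * sqrt (real T) + L0 * (radius C)\<^sup>2 * real T / (2 * real K)
           + radius C / 2 * (3 * N0 + 1) * real T / (real K powr (1/3))"
proof -
  interpret meta_mfw M C f df T K L0 F v G xstar
    by (intro meta_mfw.intro M_prob meta_mfw_axioms.intro)
      (fact C_sub xstar_in T_pos K_pos f_nonneg f_DR f_smooth F_sub F_mono
        v_in v_meas G_meas G_int G_unbiased[unfolded x_def])+
  have T_in: "T \<in> {1..T}" and one_in: "1 \<in> {1..T}" "1 \<in> {1..K}" using T_pos K_pos by auto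
  have regret_bound_nonneg: "M0 * sqrt (real T) \<ge> 0"
  proof -
    obtain \<omega> where \<omega>: "\<omega> \<in> space M" using not_empty by blast
    from regret[OF one_in(2) one_in(1) v_in[OF one_in \<omega>] \<omega>] show ?thesis by simp
  qed
  have regret_at_xstar:
    "(\<Sum>t=1..T. had (g t k \<omega>) (ones - x t k \<omega>) \<bullet> (xstar - v t k \<omega>)) \<le> M0 * sqrt (real T)"
    if "k \<in> {1..K}" "\<omega> \<in> space M" for k \<omega>
    using regret[OF that(1) T_in xstar_in that(2)] by (simp add: inner_diff_right sum_subtractf)
  have N_grad: "4 powr (2/3) * (norm (df t (x t 1 \<omega>)))\<^sup>2 \<le> N0"
    if "t \<in> {1..T}" "\<omega> \<in> space M" for t \<omega>
    using mult_left_mono[OF grad_at_first_iterate_le_SUP[OF that], of "4 powr (2/3)"]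
    unfolding N0_def x_def by (simp add: le_max_iff_disj)
  have N_smooth: "6 * (L0 * radius C)\<^sup>2 \<le> N0" unfolding N0_def by (rule max.coboundedI2) simp
  have "(1 / exp 1) * (\<Sum>t=1..T. f t xstar) - (\<Sum>t=1..T. \<integral>\<omega>. f t (x t K \<omega>) \<partial>M)
      \<le> M0 * sqrt (real T) + real T * round_error N0"
    unfolding x_def
    by (rule expected_gap_le[OF _ regret_bound_nonneg _ N_smooth])
      (use regret_at_xstar N_grad in \<open>simp_all add: x_def g_def\<close>)
  then show ?thesis by (simp add: round_error_def algebra_simps)
qed

end
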